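(* Let $F$ be a field of characteristic $0$, $d,n\ge1$, and let $G(x_1,\dots,x_{d^2})\in F\langle X\rangle^{\otimes n}$ be a tensor polynomial in the $d^2$ variables $x_1,\dots,x_{d^2}$ which is multilinear and alternating as a function on $M_d(F)^{d^2}$ with values in $M_d(F)^{\otimes n}$. Then there is an element $J_G\in M_d(F)^{\otimes n}$, invariant under the diagonal conjugation action of $GL(d)$ and lying in the linear span $\Sigma_n(F^d)$ of the permutation operators of the tensor factors in $M_d(F)^{\otimes n}=\mathrm{End}((F^d)^{\otimes n})$, such that for all $x_1,\dots,x_{d^2}\in M_d(F)$ $$G(x_1,\dots,x_{d^2})=\det(x_1,\dots,x_{d^2})\,J_G.$$
   Context: $F\langle X\rangle$ is the free associative algebra in $x_1,x_2,\dots$; an element of $F\langle X\rangle^{\otimes n}$ is evaluated on matrices via the algebra homomorphism $F\langle X\rangle^{\otimes n}\to M_d(F)^{\otimes n}$ induced by $x_i\mapsto x_i\in M_d(F)$. For $x_1,\dots,x_{d^2}\in M_d(F)$, $\det(x_1,\dots,x_{d^2})$ is the determinant of the $d^2\times d^2$ matrix whose $i$-th column is the coordinate vector of $x_i$ in the basis of elementary matrices $e_{i,j}$ ordered lexicographically. $S_n$ acts on $(F^d)^{\otimes n}$ by permuting tensor factors, and $GL(d)$ acts diagonally, $g(y_1\otimes\cdots\otimes y_n)=gy_1\otimes\cdots\otimes gy_n$. *)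

theory Defs
  imports "Jordan_Normal_Form.Determinant" "HOL-Combinatorics.Permutations"
begin

text \<open>An element of M_d(F)^{\<otimes>n} = End((F^d)^{\<otimes>n}) is represented by its matrix
 entries, a function T :: nat list \<Rightarrow> nat list \<Rightarrow> 'a, meaningful on
 multi-indices of length n with entries < d.\<close>

definition idx :: "nat \<Rightarrow> nat \<Rightarrow> nat list set" where
  "idx d n = {is. length is = n \<and> set is \<subseteq> {..<d}}"

definition word_mat :: "nat \<Rightarrow> (nat \<Rightarrow> 'a::comm_ring_1 mat) \<Rightarrow> nat list \<Rightarrow> 'a mat" where
  "word_mat d xs w = foldr (\<lambda>v M. xs v * M) w (1\<^sub>m d)"

text \<open>A tensor polynomial in F<X>^{\<otimes>n} is a finitely supported coefficient function
 on n-tuples of words (basis w_1 \<otimes> ... \<otimes> w_n).\<close>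
definition tensor_poly :: "nat \<Rightarrow> nat \<Rightarrow> (nat list list \<Rightarrow> 'a::zero) \<Rightarrow> bool" where
  "tensor_poly d n G \<longleftrightarrow> finite {m. G m \<noteq> 0} \<and>
     (\<forall>m. G m \<noteq> 0 \<longrightarrow> length m = n \<and> (\<forall>w\<in>set m. \<forall>v\<in>set w. v < d * d))"

definition teval :: "nat \<Rightarrow> nat \<Rightarrow> (nat list list \<Rightarrow> 'a::comm_ring_1) \<Rightarrow> (nat \<Rightarrow> 'a mat)
    \<Rightarrow> nat list \<Rightarrow> nat list \<Rightarrow> 'a" where
  "teval d n G xs is js = (\<Sum>m\<in>{m. G m \<noteq> 0}. G m * (\<Prod>k<n. word_mat d xs (m ! k) $$ (is ! k, js ! k)))"

text \<open>Determinant of the d^2 x d^2 matrix whose c-th column is the coordinate vector of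
 xs c in the lexicographically ordered basis e_{i,j} (row index i*d+j).\<close>
definition det_coords :: "nat \<Rightarrow> (nat \<Rightarrow> 'a::comm_ring_1 mat) \<Rightarrow> 'a" where
  "det_coords d xs = det (mat (d * d) (d * d) (\<lambda>(r, c). xs c $$ (r div d, r mod d)))"

definition multilinear_alternating :: "nat \<Rightarrow> nat \<Rightarrow> ((nat \<Rightarrow> 'a::comm_ring_1 mat) \<Rightarrow> nat list \<Rightarrow> nat list \<Rightarrow> 'a) \<Rightarrow> bool" where
  "multilinear_alternating d n f \<longleftrightarrow>
     (\<forall>xs i y z a b. (\<forall>k<d*d. xs k \<in> carrier_mat d d) \<longrightarrow> i < d * d \<longrightarrow>
        y \<in> carrier_mat d d \<longrightarrow> z \<in> carrier_mat d d \<longrightarrow>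
        (\<forall>is\<in>idx d n. \<forall>js\<in>idx d n.
           f (xs(i := a \<cdot>\<^sub>m y + b \<cdot>\<^sub>m z)) is js = a * f (xs(i := y)) is js + b * f (xs(i := z)) is js)) \<and>
     (\<forall>xs i j. (\<forall>k<d*d. xs k \<in> carrier_mat d d) \<longrightarrow> i < d * d \<longrightarrow> j < d * d \<longrightarrow> i \<noteq> j \<longrightarrow>
        xs i = xs j \<longrightarrow> (\<forall>is\<in>idx d n. \<forall>js\<in>idx d n. f xs is js = 0))"

text \<open>Matrix of the operator permuting tensor factors:
 y_1 \<otimes> .. \<otimes> y_n \<mapsto> y_{\<sigma>(1)} \<otimes> .. \<otimes> y_{\<sigma>(n)} (convention irrelevant for the span).\<close>
definition perm_op :: "nat \<Rightarrow> (nat \<Rightarrow> nat) \<Rightarrow> nat list \<Rightarrow> nat list \<Rightarrow> 'a::comm_ring_1" where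
  "perm_op n \<sigma> is js = (if \<forall>k<n. is ! k = js ! \<sigma> k then 1 else 0)"

definition in_perm_span :: "nat \<Rightarrow> nat \<Rightarrow> (nat list \<Rightarrow> nat list \<Rightarrow> 'a::comm_ring_1) \<Rightarrow> bool" where
  "in_perm_span d n J \<longleftrightarrow> (\<exists>c. \<forall>is\<in>idx d n. \<forall>js\<in>idx d n.
      J is js = (\<Sum>\<sigma>\<in>{\<sigma>. \<sigma> permutes {..<n}}. c \<sigma> * perm_op n \<sigma> is js))"

definition tpow :: "nat \<Rightarrow> 'a::comm_ring_1 mat \<Rightarrow> nat list \<Rightarrow> nat list \<Rightarrow> 'a" where
  "tpow n g is js = (\<Prod>k<n. g $$ (is ! k, js ! k))"

definition tmul :: "nat \<Rightarrow> nat \<Rightarrow> (nat list \<Rightarrow> nat list \<Rightarrow> 'a::comm_ring_1) \<Rightarrow> (nat list \<Rightarrow> nat list \<Rightarrow> 'a)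
    \<Rightarrow> nat list \<Rightarrow> nat list \<Rightarrow> 'a" where
  "tmul d n A B is js = (\<Sum>ks\<in>idx d n. A is ks * B ks js)"

definition GL_invariant :: "nat \<Rightarrow> nat \<Rightarrow> (nat list \<Rightarrow> nat list \<Rightarrow> 'a::comm_ring_1) \<Rightarrow> bool" where
  "GL_invariant d n J \<longleftrightarrow> (\<forall>g h. g \<in> carrier_mat d d \<longrightarrow> h \<in> carrier_mat d d \<longrightarrow>
      g * h = 1\<^sub>m d \<longrightarrow> h * g = 1\<^sub>m d \<longrightarrow>
      (\<forall>is\<in>idx d n. \<forall>js\<in>idx d n. tmul d n (tmul d n (tpow n g) J) (tpow n h) is js = J is js))"

end

theory Submission
  imports Defs "Jordan_Normal_Form.Char_Poly"
begin

text \<open>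
  A multilinear alternating function of d^2 matrices is determined by its value at the basis of
  matrix units, so G(x) = det(x) J with J the value of G at the matrix units. Conjugating all
  arguments by g multiplies the determinant by det(g)^d det(g^-1)^d = 1, while it conjugates
  the value of G by g^{\<otimes>n}; hence J commutes with g^{\<otimes>n} for every invertible g and,
  by a polynomial argument in characteristic 0, with every X^{\<otimes>n}. Polarization shows that
  the X^{\<otimes>n} span the operators commuting with all permutations of the tensor factors, so J lies
  in the commutant of that algebra. Averaging a linear projection over S_n (Maschke's trick) shows
  that this double commutant is the span of the permutation operators.
\<close>

section \<open>Multi-indices and operators on the tensor power\<close>

lemma idx_iff: "is \<in> idx d n \<longleftrightarrow> length is = n \<and> (\<forall>k<n. is ! k < d)"
  unfolding idx_def by (auto simp: in_set_conv_nth subset_iff)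

lemma idx_Suc: "idx d (Suc n) = (\<lambda>(a, ks). a # ks) ` ({..<d} \<times> idx d n)"
proof
  show "idx d (Suc n) \<subseteq> (\<lambda>(a, ks). a # ks) ` ({..<d} \<times> idx d n)"
  proof
    fix x assume "x \<in> idx d (Suc n)"
    then obtain a ks where "x = a # ks" "a < d" "ks \<in> idx d n"
      unfolding idx_def by (cases x) auto
    then show "x \<in> (\<lambda>(a, ks). a # ks) ` ({..<d} \<times> idx d n)" by force
  qed
qed (auto simp: idx_def)

lemma finite_idx [simp]: "finite (idx d n)"
  by (induct n) (auto simp: idx_Suc, simp add: idx_def)

lemma sum_idx_prod:
  "(\<Sum>ks\<in>idx d n. \<Prod>k<n. F k (ks ! k)) = (\<Prod>k<n. \<Sum>a<d. (F k a :: 'a::comm_semiring_1))"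
proof (induct n arbitrary: F)
  case 0
  have "idx d 0 = {[]}" by (auto simp: idx_def)
  then show ?case by simp
next
  case (Suc n)
  have inj: "inj_on (\<lambda>(a, ks). a # ks) ({..<d} \<times> idx d n)" by (auto simp: inj_on_def)
  have "(\<Sum>ks\<in>idx d (Suc n). \<Prod>k<Suc n. F k (ks ! k))
      = (\<Sum>(a, ks)\<in>{..<d} \<times> idx d n. \<Prod>k<Suc n. F k ((a # ks) ! k))"
    unfolding idx_Suc by (subst sum.reindex[OF inj]) (simp add: case_prod_beta)
  also have "\<dots> = (\<Sum>(a, ks)\<in>{..<d} \<times> idx d n. F 0 a * (\<Prod>k<n. F (Suc k) (ks ! k)))"
    by (rule sum.cong, simp, unfold prod.lessThan_Suc_shift) (simp add: case_prod_beta)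
  also have "\<dots> = (\<Sum>a<d. F 0 a) * (\<Sum>ks\<in>idx d n. \<Prod>k<n. F (Suc k) (ks ! k))"
    by (simp add: sum.cartesian_product[symmetric] sum_product)
  also have "\<dots> = (\<Prod>k<Suc n. \<Sum>a<d. F k a)"
    unfolding Suc[of "\<lambda>k. F (Suc k)"] prod.lessThan_Suc_shift ..
  finally show ?case .
qed

lemma permute_list_idx:
  assumes "\<sigma> permutes {..<n}" and "b \<in> idx d n"
  shows "permute_list \<sigma> b \<in> idx d n"
proof -
  from assms(2) have b: "length b = n" "set b \<subseteq> {..<d}" by (simp_all add: idx_def)
  with assms(1) have "set (permute_list \<sigma> b) = set b" by (intro set_permute_list) simp
  with b have "set (permute_list \<sigma> b) \<subseteq> {..<d}" and "length (permute_list \<sigma> b) = n"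
    by simp_all
  then show ?thesis unfolding idx_def by blast
qed

lemma eq_permute_list_iff_nth:
  assumes "length x = length b"
  shows "x = permute_list \<sigma> b \<longleftrightarrow> (\<forall>k<length b. x ! k = b ! \<sigma> k)"
proof -
  have "permute_list \<sigma> b ! k = b ! \<sigma> k" if "k < length b" for k
    using that by (simp add: permute_list_def)
  then show ?thesis using assms by (simp add: list_eq_iff_nth_eq)
qed

lemma permute_list_inv_cancel:
  assumes "\<sigma> permutes {..<length a}"
  shows "permute_list (Hilbert_Choice.inv \<sigma>) (permute_list \<sigma> a) = a"
proof -
  have "permute_list (Hilbert_Choice.inv \<sigma>) (permute_list \<sigma> a) = permute_list (\<sigma> \<circ> Hilbert_Choice.inv \<sigma>) a"
    using permutes_inv[OF assms] by (rule permute_list_compose[symmetric])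
  then show ?thesis using permutes_inv_o(1)[OF assms] by simp
qed

lemma eq_permute_list_iff_inv:
  assumes "\<sigma> permutes {..<length z}" and "length x = length z"
  shows "x = permute_list \<sigma> z \<longleftrightarrow> z = permute_list (Hilbert_Choice.inv \<sigma>) x"
proof
  assume "x = permute_list \<sigma> z"
  then show "z = permute_list (Hilbert_Choice.inv \<sigma>) x"
    using permute_list_inv_cancel[OF assms(1)] by simp
next
  assume z: "z = permute_list (Hilbert_Choice.inv \<sigma>) x"
  have "permute_list \<sigma> z = permute_list (Hilbert_Choice.inv \<sigma> \<circ> \<sigma>) x"
    unfolding z using assms by (intro permute_list_compose[symmetric]) simp
  then show "x = permute_list \<sigma> z"
    using permutes_inv_o(2)[OF assms(1)] by simp
qed

lemma permute_list_inv_eq_iff: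
  assumes "\<sigma> permutes {..<n}" and "x \<in> idx d n" and "b \<in> idx d n"
  shows "permute_list (Hilbert_Choice.inv \<sigma>) x = b \<longleftrightarrow> x = permute_list \<sigma> b"
proof -
  have "x = permute_list \<sigma> b \<longleftrightarrow> b = permute_list (Hilbert_Choice.inv \<sigma>) x"
    using assms by (intro eq_permute_list_iff_inv) (simp_all add: idx_iff)
  then show ?thesis by metis
qed

lemma perm_op_eq:
  assumes "length x = n" and "length b = n"
  shows "perm_op n \<sigma> x b = (if x = permute_list \<sigma> b then 1 else 0)"
  using assms by (simp add: perm_op_def eq_permute_list_iff_nth)

lemma tmul_cong:
  assumes "\<forall>z\<in>idx d n. A x z = A' x z" and "\<forall>z\<in>idx d n. B z y = B' z y"
  shows "tmul d n A B x y = tmul d n A' B' x y"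
  using assms unfolding tmul_def by auto

lemma tmul_assoc: "tmul d n (tmul d n A B) C = tmul d n A (tmul d n B C)"
  unfolding tmul_def
  by (auto simp: fun_eq_iff sum_distrib_left sum_distrib_right mult.assoc intro: sum.swap)

lemma tmul_sum_left:
  "tmul d n (\<lambda>a b. \<Sum>m\<in>S. c m * A m a b) B x y = (\<Sum>m\<in>S. c m * tmul d n (A m) B x y)"
  unfolding tmul_def by (simp add: sum_distrib_left sum_distrib_right mult.assoc sum.swap[of _ S])

lemma tmul_sum_right:
  "tmul d n B (\<lambda>a b. \<Sum>m\<in>S. c m * A m a b) x y = (\<Sum>m\<in>S. c m * tmul d n B (A m) x y)"
  unfolding tmul_def
  by (simp add: sum_distrib_left sum_distrib_right mult.assoc mult.left_commute sum.swap[of _ S])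

lemma tmul_perm_op_left:
  assumes "\<sigma> permutes {..<n}" and "x \<in> idx d n"
  shows "tmul d n (perm_op n \<sigma>) Y x y = Y (permute_list (Hilbert_Choice.inv \<sigma>) x) y"
proof -
  have "tmul d n (perm_op n \<sigma>) Y x y
      = (\<Sum>z\<in>idx d n. if z = permute_list (Hilbert_Choice.inv \<sigma>) x then Y z y else 0)"
    unfolding tmul_def
  proof (intro sum.cong refl)
    fix z assume z: "z \<in> idx d n"
    have iff: "x = permute_list \<sigma> z \<longleftrightarrow> z = permute_list (Hilbert_Choice.inv \<sigma>) x"
      using z assms by (intro eq_permute_list_iff_inv) (auto simp: idx_iff)
    have "perm_op n \<sigma> x z = (if x = permute_list \<sigma> z then 1 else 0)"
      using z assms(2) by (simp add: perm_op_eq idx_iff)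
    then have p: "perm_op n \<sigma> x z = (if z = permute_list (Hilbert_Choice.inv \<sigma>) x then 1 else 0)"
      by (simp only: iff)
    show "perm_op n \<sigma> x z * Y z y
        = (if z = permute_list (Hilbert_Choice.inv \<sigma>) x then Y z y else 0)"
      by (simp add: p)
  qed
  also have "\<dots> = Y (permute_list (Hilbert_Choice.inv \<sigma>) x) y"
    using assms by (simp add: permute_list_idx permutes_inv)
  finally show ?thesis .
qed

lemma tmul_perm_op_right:
  assumes "\<sigma> permutes {..<n}" and "y \<in> idx d n"
  shows "tmul d n Y (perm_op n \<sigma>) x y = Y x (permute_list \<sigma> y)"
proof -
  have "tmul d n Y (perm_op n \<sigma>) x y = (\<Sum>z\<in>idx d n. if z = permute_list \<sigma> y then Y x z else 0)"
    unfolding tmul_def using assms by (intro sum.cong refl) (auto simp: perm_op_eq idx_iff)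
  also have "\<dots> = Y x (permute_list \<sigma> y)"
    using assms by (simp add: permute_list_idx)
  finally show ?thesis .
qed

definition tensor_mats :: "nat \<Rightarrow> (nat \<Rightarrow> 'a::comm_ring_1 mat) \<Rightarrow> nat list \<Rightarrow> nat list \<Rightarrow> 'a" where
  "tensor_mats n A x y = (\<Prod>k<n. A k $$ (x ! k, y ! k))"

lemma tpow_eq_tensor_mats: "tpow n g = tensor_mats n (\<lambda>_. g)"
  by (simp add: tpow_def tensor_mats_def fun_eq_iff)

lemma tmul_tensor_mats:
  assumes "x \<in> idx d n" and "y \<in> idx d n"
    and "\<And>k. k < n \<Longrightarrow> A k \<in> carrier_mat d d" and "\<And>k. k < n \<Longrightarrow> B k \<in> carrier_mat d d"
  shows "tmul d n (tensor_mats n A) (tensor_mats n B) x y = tensor_mats n (\<lambda>k. A k * B k) x y"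
proof -
  have "tmul d n (tensor_mats n A) (tensor_mats n B) x y
      = (\<Sum>z\<in>idx d n. \<Prod>k<n. A k $$ (x ! k, z ! k) * B k $$ (z ! k, y ! k))"
    unfolding tmul_def tensor_mats_def by (simp add: prod.distrib)
  also have "\<dots> = (\<Prod>k<n. \<Sum>a<d. A k $$ (x ! k, a) * B k $$ (a, y ! k))"
    by (rule sum_idx_prod)
  also have "\<dots> = tensor_mats n (\<lambda>k. A k * B k) x y"
    unfolding tensor_mats_def
  proof (rule prod.cong, simp)
    fix k assume k: "k \<in> {..<n}"
    then have "x ! k < d" "y ! k < d" using assms(1,2) by (auto simp: idx_iff)
    then show "(\<Sum>a<d. A k $$ (x ! k, a) * B k $$ (a, y ! k)) = (A k * B k) $$ (x ! k, y ! k)"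
      using assms(3,4)[of k] k by (auto simp: scalar_prod_def atLeast0LessThan intro!: sum.cong)
  qed
  finally show ?thesis .
qed

lemma tpow_one:
  assumes x: "x \<in> idx d n" and y: "y \<in> idx d n"
  shows "tpow n (1\<^sub>m d) x y = (if x = y then 1 else (0::'a::comm_ring_1))"
proof -
  have "tpow n (1\<^sub>m d :: 'a mat) x y = (\<Prod>k<n. if x ! k = y ! k then 1 else 0)"
    unfolding tpow_def using x y by (intro prod.cong) (auto simp: idx_iff)
  also have "\<dots> = (if x = y then 1 else 0)"
  proof (cases "x = y")
    case False
    then obtain k where "k < n" "x ! k \<noteq> y ! k" using x y by (metis idx_iff nth_equalityI)
    then have "(\<Prod>k<n. if x ! k = y ! k then 1 else 0) = (0::'a)" by (intro prod_zero) auto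
    then show ?thesis by (simp only: if_not_P[OF False])
  qed simp
  finally show ?thesis .
qed

lemma tmul_tpow_one_right:
  assumes "y \<in> idx d n"
  shows "tmul d n A (tpow n (1\<^sub>m d)) x y = A x y"
proof -
  have "tmul d n A (tpow n (1\<^sub>m d)) x y = (\<Sum>z\<in>idx d n. if z = y then A x z else 0)"
    unfolding tmul_def using assms by (intro sum.cong refl) (auto simp: tpow_one)
  also have "\<dots> = A x y" using assms by simp
  finally show ?thesis .
qed

definition tcommute :: "nat \<Rightarrow> nat \<Rightarrow> (nat list \<Rightarrow> nat list \<Rightarrow> 'a::comm_ring_1)
    \<Rightarrow> (nat list \<Rightarrow> nat list \<Rightarrow> 'a) \<Rightarrow> bool" where
  "tcommute d n A B \<longleftrightarrow> (\<forall>x\<in>idx d n. \<forall>y\<in>idx d n. tmul d n A B x y = tmul d n B A x y)"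

text \<open>The operators commuting with all permutations of the tensor factors.\<close>

definition perm_invariant :: "nat \<Rightarrow> nat \<Rightarrow> (nat list \<Rightarrow> nat list \<Rightarrow> 'a) \<Rightarrow> bool" where
  "perm_invariant d n Y \<longleftrightarrow> (\<forall>\<sigma> a b. \<sigma> permutes {..<n} \<longrightarrow> a \<in> idx d n \<longrightarrow> b \<in> idx d n \<longrightarrow>
     Y (permute_list \<sigma> a) (permute_list \<sigma> b) = Y a b)"

lemma tcommute_sum:
  assumes A: "\<And>i. i \<in> S \<Longrightarrow> tcommute d n (A i) T"
    and Y: "\<And>x y. x \<in> idx d n \<Longrightarrow> y \<in> idx d n \<Longrightarrow> Y x y = (\<Sum>i\<in>S. c i * A i x y)"
  shows "tcommute d n Y T"
  unfolding tcommute_def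
proof (intro ballI)
  fix x y assume x: "x \<in> idx d n" and y: "y \<in> idx d n"
  have "tmul d n Y T x y = tmul d n (\<lambda>u v. \<Sum>i\<in>S. c i * A i u v) T x y"
    using x Y by (intro tmul_cong) auto
  also have "\<dots> = (\<Sum>i\<in>S. c i * tmul d n (A i) T x y)" by (rule tmul_sum_left)
  also have "\<dots> = (\<Sum>i\<in>S. c i * tmul d n T (A i) x y)"
    using A x y by (auto simp: tcommute_def intro!: sum.cong)
  also have "\<dots> = tmul d n T (\<lambda>u v. \<Sum>i\<in>S. c i * A i u v) x y" by (rule tmul_sum_right[symmetric])
  also have "\<dots> = tmul d n T Y x y"
    using y Y by (intro tmul_cong) auto
  finally show "tmul d n Y T x y = tmul d n T Y x y" .
qed

lemma GL_invariant_tcommute_tpow: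
  assumes J: "GL_invariant d n J"
    and g: "g \<in> carrier_mat d d" and h: "h \<in> carrier_mat d d"
    and gh: "g * h = 1\<^sub>m d" and hg: "h * g = 1\<^sub>m d"
  shows "tcommute d n (tpow n g) J"
  unfolding tcommute_def
proof (intro ballI)
  fix x y assume x: "x \<in> idx d n" and y: "y \<in> idx d n"
  have "tmul d n (tmul d n (tpow n g) J) (tpow n h) x z = J x z" if "z \<in> idx d n" for z
    using J[unfolded GL_invariant_def, rule_format, OF g h gh hg x that] .
  then have "tmul d n J (tpow n g) x y
      = tmul d n (tmul d n (tmul d n (tpow n g) J) (tpow n h)) (tpow n g) x y"
    by (intro tmul_cong) auto
  also have "\<dots> = tmul d n (tmul d n (tpow n g) J) (tmul d n (tpow n h) (tpow n g)) x y"
    by (simp add: tmul_assoc)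
  also have "\<dots> = tmul d n (tmul d n (tpow n g) J) (tpow n (1\<^sub>m d)) x y"
    using g h y unfolding tpow_eq_tensor_mats hg[symmetric]
    by (intro tmul_cong) (auto intro: tmul_tensor_mats)
  also have "\<dots> = tmul d n (tpow n g) J x y" by (rule tmul_tpow_one_right[OF y])
  finally show "tmul d n (tpow n g) J x y = tmul d n J (tpow n g) x y" by simp
qed


section \<open>Alternating multilinear functions of d^2 matrices\<close>


text \<open>The matrix unit e_{c div d, c mod d}: the c-th basis vector in the order used by
  det_coords.\<close>

definition elem_mat :: "nat \<Rightarrow> nat \<Rightarrow> 'a::comm_ring_1 mat" where
  "elem_mat d c = mat d d (\<lambda>(i, j). if i = c div d \<and> j = c mod d then 1 else 0)"

lemma elem_mat_carrier [simp]: "elem_mat d c \<in> carrier_mat d d"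
  by (simp add: elem_mat_def)

lemma divmod_less:
  fixes d r :: nat
  assumes "r < d * d"
  shows "r div d < d" and "r mod d < d"
proof -
  have "d > 0" using assms by (cases d) auto
  then show "r div d < d" "r mod d < d" using assms by (auto simp: less_mult_imp_div_less)
qed

lemma mult_add_less_square:
  fixes a b d :: nat
  assumes "a < d" and "b < d"
  shows "a * d + b < d * d"
proof -
  have "a * d + b < (a + 1) * d" using assms by simp
  also have "\<dots> \<le> d * d" using assms by (intro mult_right_mono) auto
  finally show ?thesis .
qed

lemma sum_less_square_divmod:
  fixes d :: nat
  shows "(\<Sum>q<d*d. F (q div d) (q mod d)) = (\<Sum>a<d. \<Sum>b<d. (F a b :: 'a::comm_monoid_add))"
proof -
  have "(\<Sum>a<d. \<Sum>b<d. F a b) = (\<Sum>(a, b)\<in>{..<d} \<times> {..<d}. F a b)"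
    by (simp add: sum.cartesian_product)
  also have "\<dots> = (\<Sum>q<d*d. F (q div d) (q mod d))"
    by (rule sum.reindex_bij_witness[where i = "\<lambda>q. (q div d, q mod d)" and j = "\<lambda>(a, b). a * d + b"])
       (auto simp: divmod_less mult_add_less_square)
  finally show ?thesis by simp
qed

lemma mat_eq_sum_elem_mat:
  assumes "A \<in> carrier_mat d d"
  shows "A = mat d d (\<lambda>p. \<Sum>r<d*d. A $$ (r div d, r mod d) * elem_mat d r $$ p)"
proof (rule eq_matI)
  fix i j assume "i < dim_row (mat d d (\<lambda>p. \<Sum>r<d*d. A $$ (r div d, r mod d) * elem_mat d r $$ p))"
    and "j < dim_col (mat d d (\<lambda>p. \<Sum>r<d*d. A $$ (r div d, r mod d) * elem_mat d r $$ p))"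
  then have ij: "i < d" "j < d" by auto
  have "(\<Sum>r<d*d. A $$ (r div d, r mod d) * elem_mat d r $$ (i, j))
      = (\<Sum>a<d. \<Sum>b<d. if a = i then if b = j then A $$ (a, b) else 0 else 0)"
    using ij by (subst sum_less_square_divmod[symmetric]) (auto simp: elem_mat_def intro!: sum.cong)
  also have "\<dots> = (\<Sum>a<d. if a = i then A $$ (a, j) else 0)"
    using ij by (intro sum.cong refl) auto
  also have "\<dots> = A $$ (i, j)"
    using ij by simp
  finally show "A $$ (i, j) = mat d d (\<lambda>p. \<Sum>r<d*d. A $$ (r div d, r mod d) * elem_mat d r $$ p) $$ (i, j)"
    using ij by simp
qed (use assms in auto)

lemma sum_inj_PiE_eq_sum_permutes:
  fixes m :: nat
  shows "(\<Sum>f\<in>{f\<in>{..<m} \<rightarrow>\<^sub>E {..<m}. inj_on f {..<m}}. F f)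
   = (\<Sum>\<sigma> | \<sigma> permutes {..<m}. F (restrict \<sigma> {..<m}))"
proof (rule sym, rule sum.reindex_bij_witness[where i = "\<lambda>f k. if k < m then f k else k"
      and j = "\<lambda>\<sigma>. restrict \<sigma> {..<m}"])
  fix \<sigma> assume "\<sigma> \<in> {\<sigma>. \<sigma> permutes {..<m}}"
  then have s: "\<sigma> permutes {..<m}" by simp
  show "(\<lambda>k. if k < m then restrict \<sigma> {..<m} k else k) = \<sigma>"
    using s by (auto simp: fun_eq_iff permutes_not_in)
  have "inj \<sigma>" using permutes_inj[OF s] .
  moreover have "\<sigma> k < m" if "k < m" for k using permutes_in_image[OF s, of k] that by simp
  ultimately show "restrict \<sigma> {..<m} \<in> {f \<in> {..<m} \<rightarrow>\<^sub>E {..<m}. inj_on f {..<m}}"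
    by (auto simp: inj_on_def dest: injD)
next
  fix f assume "f \<in> {f \<in> {..<m} \<rightarrow>\<^sub>E {..<m}. inj_on f {..<m}}"
  then have f: "f \<in> {..<m} \<rightarrow>\<^sub>E {..<m}" "inj_on f {..<m}" by auto
  show "restrict (\<lambda>k. if k < m then f k else k) {..<m} = f"
    using f(1) by (auto simp: fun_eq_iff PiE_def extensional_def)
  have "f ` {..<m} = {..<m}" using f by (intro endo_inj_surj) auto
  then have "bij_betw (\<lambda>k. if k < m then f k else k) {..<m} {..<m}"
    unfolding bij_betw_def using f(2) by (auto simp: inj_on_def image_def)
  then show "(\<lambda>k. if k < m then f k else k) \<in> {\<sigma>. \<sigma> permutes {..<m}}"
    by (auto intro!: bij_imp_permutes split: if_splits)
qed simp

lemma det_coords_Leibniz: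
  "det_coords d xs
     = (\<Sum>\<sigma> | \<sigma> permutes {..<d*d}. signof \<sigma> * (\<Prod>c<d*d. xs c $$ (\<sigma> c div d, \<sigma> c mod d)))"
proof -
  let ?A = "mat (d*d) (d*d) (\<lambda>(r, c). xs c $$ (r div d, r mod d))"
  have "det_coords d xs = det (transpose_mat ?A)"
    unfolding det_coords_def by (rule det_transpose[symmetric]) auto
  also have "\<dots> = (\<Sum>\<sigma> | \<sigma> permutes {0..<d*d}. signof \<sigma> * (\<Prod>i=0..<d*d. transpose_mat ?A $$ (i, \<sigma> i)))"
    by (rule det_def') auto
  also have "\<dots> = (\<Sum>\<sigma> | \<sigma> permutes {..<d*d}. signof \<sigma> * (\<Prod>c<d*d. xs c $$ (\<sigma> c div d, \<sigma> c mod d)))"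
    by (intro sum.cong)
       (auto simp: atLeast0LessThan permutes_in_image intro!: prod.cong arg_cong2[where f = "(*)"])
  finally show ?thesis .
qed

definition alternating_form :: "nat \<Rightarrow> ((nat \<Rightarrow> 'a::comm_ring_1 mat) \<Rightarrow> 'a) \<Rightarrow> bool" where
  "alternating_form d \<phi> \<longleftrightarrow>
     (\<forall>xs i y z a b. (\<forall>k<d*d. xs k \<in> carrier_mat d d) \<longrightarrow> i < d * d \<longrightarrow>
        y \<in> carrier_mat d d \<longrightarrow> z \<in> carrier_mat d d \<longrightarrow>
        \<phi> (xs(i := a \<cdot>\<^sub>m y + b \<cdot>\<^sub>m z)) = a * \<phi> (xs(i := y)) + b * \<phi> (xs(i := z))) \<and>
     (\<forall>xs i j. (\<forall>k<d*d. xs k \<in> carrier_mat d d) \<longrightarrow> i < d * d \<longrightarrow> j < d * d \<longrightarrow> i \<noteq> j \<longrightarrow>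
        xs i = xs j \<longrightarrow> \<phi> xs = 0) \<and>
     (\<forall>xs ys. (\<forall>k<d*d. xs k = ys k) \<longrightarrow> \<phi> xs = \<phi> ys)"

context
  fixes d :: nat and \<phi> :: "(nat \<Rightarrow> 'a::field mat) \<Rightarrow> 'a"
  assumes alt: "alternating_form d \<phi>"
begin

lemma alternating_form_linear:
  "(\<forall>k<d*d. xs k \<in> carrier_mat d d) \<Longrightarrow> i < d * d \<Longrightarrow> y \<in> carrier_mat d d \<Longrightarrow>
   z \<in> carrier_mat d d \<Longrightarrow>
   \<phi> (xs(i := a \<cdot>\<^sub>m y + b \<cdot>\<^sub>m z)) = a * \<phi> (xs(i := y)) + b * \<phi> (xs(i := z))"
  using alt unfolding alternating_form_def by blast

lemma alternating_form_eq_zero: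
  "(\<forall>k<d*d. xs k \<in> carrier_mat d d) \<Longrightarrow> i < d * d \<Longrightarrow> j < d * d \<Longrightarrow> i \<noteq> j \<Longrightarrow>
   xs i = xs j \<Longrightarrow> \<phi> xs = 0"
  using alt unfolding alternating_form_def by blast

lemma alternating_form_cong: "(\<forall>k<d*d. xs k = ys k) \<Longrightarrow> \<phi> xs = \<phi> ys"
  using alt unfolding alternating_form_def by blast

lemma alternating_form_sum:
  assumes fin: "finite R" and ys: "\<forall>k<d*d. ys k \<in> carrier_mat d d" and i: "i < d * d"
    and Y: "\<forall>r\<in>R. Y r \<in> carrier_mat d d"
  shows "\<phi> (ys(i := mat d d (\<lambda>p. \<Sum>r\<in>R. c r * Y r $$ p))) = (\<Sum>r\<in>R. c r * \<phi> (ys(i := Y r)))"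
  using fin Y
proof (induct R rule: finite_induct)
  case empty
  have "mat d d (\<lambda>p. 0) = 0 \<cdot>\<^sub>m 0\<^sub>m d d + 0 \<cdot>\<^sub>m (0\<^sub>m d d :: 'a mat)"
    by (rule eq_matI) auto
  then show ?case
    using alternating_form_linear[OF ys i zero_carrier_mat zero_carrier_mat, of 0 0]
    by (simp only: sum.empty mult_zero_left add_0)
next
  case (insert r R)
  have "mat d d (\<lambda>p. \<Sum>r\<in>insert r R. c r * Y r $$ p)
      = c r \<cdot>\<^sub>m Y r + 1 \<cdot>\<^sub>m mat d d (\<lambda>p. \<Sum>r\<in>R. c r * Y r $$ p)"
    using insert by (intro eq_matI) auto
  then have "\<phi> (ys(i := mat d d (\<lambda>p. \<Sum>r\<in>insert r R. c r * Y r $$ p)))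
      = \<phi> (ys(i := c r \<cdot>\<^sub>m Y r + 1 \<cdot>\<^sub>m mat d d (\<lambda>p. \<Sum>r\<in>R. c r * Y r $$ p)))"
    by (simp only:)
  also have "\<dots> = c r * \<phi> (ys(i := Y r)) + 1 * \<phi> (ys(i := mat d d (\<lambda>p. \<Sum>r\<in>R. c r * Y r $$ p)))"
    by (rule alternating_form_linear[OF ys i]) (use insert in auto)
  also have "\<phi> (ys(i := mat d d (\<lambda>p. \<Sum>r\<in>R. c r * Y r $$ p))) = (\<Sum>r\<in>R. c r * \<phi> (ys(i := Y r)))"
    using insert(3,4) by blast
  then have "c r * \<phi> (ys(i := Y r)) + 1 * \<phi> (ys(i := mat d d (\<lambda>p. \<Sum>r\<in>R. c r * Y r $$ p)))
      = (\<Sum>r\<in>insert r R. c r * \<phi> (ys(i := Y r)))"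
    by (simp only: mult_1 sum.insert[OF insert(1,2)])
  finally show ?case .
qed

lemma alternating_form_expand:
  assumes xs: "\<forall>k<d*d. xs k \<in> carrier_mat d d" and k: "k \<le> d * d"
  shows "\<phi> xs = (\<Sum>f\<in>{..<k} \<rightarrow>\<^sub>E {..<d*d}.
      (\<Prod>c<k. xs c $$ (f c div d, f c mod d)) * \<phi> (\<lambda>c. if c < k then elem_mat d (f c) else xs c))"
  using k
proof (induct k)
  case 0
  then show ?case by simp
next
  case (Suc k)
  let ?N = "d * d"
  let ?M = "\<lambda>r c. xs c $$ (r div d, r mod d)"
  let ?ys = "\<lambda>f c. if c < k then elem_mat d (f c) else xs c"
  have k: "k < ?N" using Suc by simp
  have one: "\<phi> (?ys f) = (\<Sum>r<?N. ?M r k * \<phi> ((?ys f)(k := elem_mat d r)))" for f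
  proof -
    have "?ys f = (?ys f)(k := mat d d (\<lambda>p. \<Sum>r<?N. ?M r k * elem_mat d r $$ p))"
      using mat_eq_sum_elem_mat[of "xs k" d] xs k by (auto simp: fun_eq_iff)
    then have "\<phi> (?ys f) = \<phi> ((?ys f)(k := mat d d (\<lambda>p. \<Sum>r<?N. ?M r k * elem_mat d r $$ p)))"
      by simp
    also have "\<dots> = (\<Sum>r<?N. ?M r k * \<phi> ((?ys f)(k := elem_mat d r)))"
      by (rule alternating_form_sum) (use xs k in auto)
    finally show ?thesis .
  qed
  have upd: "(?ys f)(k := elem_mat d r) = (\<lambda>c. if c < Suc k then elem_mat d ((f(k := r)) c) else xs c)"
    for f r
    by (auto simp: fun_eq_iff)
  have "\<phi> xs = (\<Sum>f\<in>{..<k} \<rightarrow>\<^sub>E {..<?N}. (\<Prod>c<k. ?M (f c) c) * \<phi> (?ys f))"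
    using Suc by simp
  also have "\<dots> = (\<Sum>f\<in>{..<k} \<rightarrow>\<^sub>E {..<?N}. \<Sum>r<?N.
       (\<Prod>c<Suc k. ?M ((f(k := r)) c) c)
         * \<phi> (\<lambda>c. if c < Suc k then elem_mat d ((f(k := r)) c) else xs c))"
  proof (rule sum.cong[OF refl])
    fix f
    have "(\<Prod>c<Suc k. ?M ((f(k := r)) c) c) = ?M r k * (\<Prod>c<k. ?M (f c) c)" for r
      by (simp add: prod.lessThan_Suc)
    then show "(\<Prod>c<k. ?M (f c) c) * \<phi> (?ys f) = (\<Sum>r<?N.
       (\<Prod>c<Suc k. ?M ((f(k := r)) c) c)
         * \<phi> (\<lambda>c. if c < Suc k then elem_mat d ((f(k := r)) c) else xs c))"
      unfolding one upd[symmetric] by (simp add: sum_distrib_left mult_ac)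
  qed
  also have "\<dots> = (\<Sum>(f, r)\<in>({..<k} \<rightarrow>\<^sub>E {..<?N}) \<times> {..<?N}.
       (\<Prod>c<Suc k. ?M ((f(k := r)) c) c)
         * \<phi> (\<lambda>c. if c < Suc k then elem_mat d ((f(k := r)) c) else xs c))"
    by (simp add: sum.cartesian_product)
  also have "\<dots> = (\<Sum>g\<in>{..<Suc k} \<rightarrow>\<^sub>E {..<?N}.
       (\<Prod>c<Suc k. ?M (g c) c) * \<phi> (\<lambda>c. if c < Suc k then elem_mat d (g c) else xs c))"
    by (rule sum.reindex_bij_witness[where i = "\<lambda>g. (g(k := undefined), g k)" and j = "\<lambda>(f, r). f(k := r)"])
       (auto simp: PiE_def extensional_def fun_eq_iff Pi_iff less_Suc_eq)
  finally show ?case .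
qed

lemma alternating_form_swap:
  assumes ys: "\<forall>k<d*d. ys k \<in> carrier_mat d d" and a: "a < d * d" and b: "b < d * d"
    and ab: "a \<noteq> b"
  shows "\<phi> (ys \<circ> Transposition.transpose a b) = - \<phi> ys"
proof -
  let ?u = "ys a" and ?v = "ys b"
  have u: "?u \<in> carrier_mat d d" and v: "?v \<in> carrier_mat d d" using ys a b by auto
  let ?W = "1 \<cdot>\<^sub>m ?u + 1 \<cdot>\<^sub>m ?v"
  have W: "?W \<in> carrier_mat d d" using u v by auto
  let ?Z = "\<lambda>p q. (ys(a := p))(b := q)"
  have Zc: "p \<in> carrier_mat d d \<Longrightarrow> q \<in> carrier_mat d d \<Longrightarrow> \<forall>k<d*d. ?Z p q k \<in> carrier_mat d d"
    for p q
    using ys by auto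
  have Z0: "\<phi> (?Z p p) = 0" if "p \<in> carrier_mat d d" for p
    using that ab by (intro alternating_form_eq_zero[OF Zc a b ab]) auto
  have Z2: "\<phi> (?Z p ?W) = \<phi> (?Z p ?u) + \<phi> (?Z p ?v)" if p: "p \<in> carrier_mat d d" for p
    using alternating_form_linear[OF Zc[OF p W] b u v, of 1 1] by (simp only: fun_upd_upd mult_1)
  have Z1: "\<phi> (?Z ?W q) = \<phi> (?Z ?u q) + \<phi> (?Z ?v q)" if q: "q \<in> carrier_mat d d" for q
  proof -
    have e: "?Z p q = (ys(b := q))(a := p)" for p using ab by (auto simp: fun_eq_iff)
    have "\<forall>k<d*d. ((ys(b := q))(a := q)) k \<in> carrier_mat d d" using Zc[OF q q] unfolding e .
    from alternating_form_linear[OF this a u v, of 1 1] show ?thesis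
      unfolding e by (simp only: fun_upd_upd mult_1)
  qed
  have "0 = \<phi> (?Z ?W ?W)" using Z0[OF W] by (rule sym)
  also have "\<dots> = \<phi> (?Z ?u ?u) + \<phi> (?Z ?u ?v) + (\<phi> (?Z ?v ?u) + \<phi> (?Z ?v ?v))"
    by (simp only: Z1[OF W] Z2[OF u] Z2[OF v])
  also have "\<dots> = \<phi> (?Z ?u ?v) + \<phi> (?Z ?v ?u)"
    by (simp only: Z0[OF u] Z0[OF v] add_0 add_0_right)
  also have "?Z ?u ?v = ys" by (auto simp: fun_eq_iff)
  also have "?Z ?v ?u = ys \<circ> Transposition.transpose a b"
    using ab by (auto simp: fun_eq_iff Transposition.transpose_def)
  finally show ?thesis by (simp add: eq_neg_iff_add_eq_0 add.commute o_def)
qed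

lemma alternating_form_permute:
  assumes s: "\<sigma> permutes {..<d*d}" and ys: "\<forall>k<d*d. ys k \<in> carrier_mat d d"
  shows "\<phi> (ys \<circ> \<sigma>) = signof \<sigma> * \<phi> ys"
  using s finite_lessThan ys
proof (induct \<sigma> arbitrary: ys rule: permutes_induct)
  case id
  then show ?case by simp
next
  case (swap a b p)
  let ?t = "Transposition.transpose a b"
  have "\<forall>k<d*d. (ys \<circ> ?t) k \<in> carrier_mat d d"
    using swap(1,2,6) by (auto simp: Transposition.transpose_def)
  from swap(4)[OF this] have "\<phi> (ys \<circ> (?t \<circ> p)) = signof p * \<phi> (ys \<circ> ?t)"
    by (simp only: o_assoc)
  also have "\<dots> = - (signof p * \<phi> ys)"
    using alternating_form_swap[OF swap(6)] swap(1-3) by simp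
  also have "signof p = - (signof (?t \<circ> p) :: 'a)"
  proof -
    have "permutation p" using swap(5) permutation_permutes by blast
    then have "sign (?t \<circ> p) = - sign p"
      using swap(3) by (simp add: sign_compose permutation_swap_id sign_swap_id)
    then show ?thesis by simp
  qed
  finally show ?case by (simp add: o_def)
qed

lemma alternating_form_eq_det_coords:
  assumes xs: "\<forall>k<d*d. xs k \<in> carrier_mat d d"
  shows "\<phi> xs = det_coords d xs * \<phi> (elem_mat d)"
proof -
  let ?N = "d * d"
  let ?P = "{..<?N} \<rightarrow>\<^sub>E {..<?N}"
  let ?F = "\<lambda>f. (\<Prod>c<?N. xs c $$ (f c div d, f c mod d)) * \<phi> (\<lambda>c. elem_mat d (f c))"
  have "\<phi> xs = (\<Sum>f\<in>?P.
      (\<Prod>c<?N. xs c $$ (f c div d, f c mod d)) * \<phi> (\<lambda>c. if c < ?N then elem_mat d (f c) else xs c))"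
    using alternating_form_expand[OF xs, of ?N] by simp
  also have "\<dots> = (\<Sum>f\<in>?P. ?F f)"
    by (intro sum.cong refl arg_cong2[where f = "(*)"] alternating_form_cong) auto
  also have "\<dots> = (\<Sum>f\<in>{f\<in>?P. inj_on f {..<?N}}. ?F f)"
  proof (rule sum.mono_neutral_right)
    show "\<forall>f\<in>?P - {f\<in>?P. inj_on f {..<?N}}. ?F f = 0"
    proof
      fix f assume "f \<in> ?P - {f\<in>?P. inj_on f {..<?N}}"
      then obtain i j where "i < ?N" "j < ?N" "i \<noteq> j" "f i = f j" by (auto simp: inj_on_def)
      then have "\<phi> (\<lambda>c. elem_mat d (f c)) = 0" by (intro alternating_form_eq_zero[of _ i j]) auto
      then show "?F f = 0" by simp
    qed
  qed (auto intro: finite_PiE)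
  also have "\<dots> = (\<Sum>\<sigma> | \<sigma> permutes {..<?N}. ?F (restrict \<sigma> {..<?N}))"
    by (rule sum_inj_PiE_eq_sum_permutes)
  also have "\<dots> = (\<Sum>\<sigma> | \<sigma> permutes {..<?N}.
      signof \<sigma> * (\<Prod>c<?N. xs c $$ (\<sigma> c div d, \<sigma> c mod d)) * \<phi> (elem_mat d))"
  proof (intro sum.cong refl)
    fix \<sigma> assume "\<sigma> \<in> {\<sigma>. \<sigma> permutes {..<?N}}"
    then have s: "\<sigma> permutes {..<?N}" by simp
    have "\<phi> (\<lambda>c. elem_mat d (restrict \<sigma> {..<?N} c)) = \<phi> (elem_mat d \<circ> \<sigma>)"
      by (intro alternating_form_cong) auto
    also have "\<dots> = signof \<sigma> * \<phi> (elem_mat d)" using alternating_form_permute[OF s] by auto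
    finally show "?F (restrict \<sigma> {..<?N})
        = signof \<sigma> * (\<Prod>c<?N. xs c $$ (\<sigma> c div d, \<sigma> c mod d)) * \<phi> (elem_mat d)"
      by simp
  qed
  also have "\<dots> = det_coords d xs * \<phi> (elem_mat d)"
    by (simp add: det_coords_Leibniz sum_distrib_right)
  finally show ?thesis .
qed

end

section \<open>The determinant of conjugation on d x d matrices\<close>

definition coord_mat :: "nat \<Rightarrow> (nat \<Rightarrow> 'a::comm_ring_1 mat) \<Rightarrow> 'a mat" where
  "coord_mat d xs = mat (d * d) (d * d) (\<lambda>(r, c). xs c $$ (r div d, r mod d))"

lemma det_coords_eq_det_coord_mat: "det_coords d xs = det (coord_mat d xs)"
  by (simp add: det_coords_def coord_mat_def)

text \<open>The matrices of X \<mapsto> g X and X \<mapsto> X h in the coordinates of coord_mat.\<close>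

definition left_mult_mat :: "nat \<Rightarrow> 'a::comm_ring_1 mat \<Rightarrow> 'a mat" where
  "left_mult_mat d g = mat (d*d) (d*d)
     (\<lambda>(r, q). g $$ (r div d, q div d) * (if r mod d = q mod d then 1 else 0))"

definition right_mult_mat :: "nat \<Rightarrow> 'a::comm_ring_1 mat \<Rightarrow> 'a mat" where
  "right_mult_mat d h = mat (d*d) (d*d)
     (\<lambda>(r, q). (if r div d = q div d then 1 else 0) * h $$ (q mod d, r mod d))"

lemma coord_mat_mult_left:
  assumes g: "g \<in> carrier_mat d d" and xs: "\<forall>c<d*d. xs c \<in> carrier_mat d d"
  shows "coord_mat d (\<lambda>c. g * xs c) = left_mult_mat d g * coord_mat d xs"
proof (rule eq_matI)
  fix r c assume "r < dim_row (left_mult_mat d g * coord_mat d xs)"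
    and "c < dim_col (left_mult_mat d g * coord_mat d xs)"
  then have r: "r < d*d" and c: "c < d*d" by (auto simp: left_mult_mat_def coord_mat_def)
  have xc: "xs c \<in> carrier_mat d d" using xs c by auto
  have "(left_mult_mat d g * coord_mat d xs) $$ (r, c)
      = (\<Sum>q<d*d. g $$ (r div d, q div d) * (if r mod d = q mod d then 1 else 0)
                   * xs c $$ (q div d, q mod d))"
    using r c by (simp add: left_mult_mat_def coord_mat_def scalar_prod_def atLeast0LessThan)
  also have "\<dots> = (\<Sum>a<d. \<Sum>b<d. g $$ (r div d, a) * (if r mod d = b then 1 else 0) * xs c $$ (a, b))"
    by (rule sum_less_square_divmod)
  also have "\<dots> = (\<Sum>a<d. g $$ (r div d, a) * xs c $$ (a, r mod d))"
    using divmod_less[OF r] by (simp add: if_distrib[of "\<lambda>x. _ * x * _"] cong: if_cong)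
  also have "\<dots> = (g * xs c) $$ (r div d, r mod d)"
    using g xc divmod_less[OF r] by (simp add: scalar_prod_def atLeast0LessThan)
  finally show "coord_mat d (\<lambda>c. g * xs c) $$ (r, c) = (left_mult_mat d g * coord_mat d xs) $$ (r, c)"
    using r c by (simp add: coord_mat_def)
qed (auto simp: left_mult_mat_def coord_mat_def)

lemma coord_mat_mult_right:
  assumes h: "h \<in> carrier_mat d d" and xs: "\<forall>c<d*d. xs c \<in> carrier_mat d d"
  shows "coord_mat d (\<lambda>c. xs c * h) = right_mult_mat d h * coord_mat d xs"
proof (rule eq_matI)
  fix r c assume "r < dim_row (right_mult_mat d h * coord_mat d xs)"
    and "c < dim_col (right_mult_mat d h * coord_mat d xs)"
  then have r: "r < d*d" and c: "c < d*d" by (auto simp: right_mult_mat_def coord_mat_def)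
  have xc: "xs c \<in> carrier_mat d d" using xs c by auto
  have "(right_mult_mat d h * coord_mat d xs) $$ (r, c)
      = (\<Sum>q<d*d. (if r div d = q div d then 1 else 0) * h $$ (q mod d, r mod d)
                   * xs c $$ (q div d, q mod d))"
    using r c by (simp add: right_mult_mat_def coord_mat_def scalar_prod_def atLeast0LessThan)
  also have "\<dots> = (\<Sum>a<d. \<Sum>b<d. (if r div d = a then 1 else 0) * h $$ (b, r mod d) * xs c $$ (a, b))"
    by (rule sum_less_square_divmod)
  also have "\<dots> = (\<Sum>a<d. if a = r div d then \<Sum>b<d. h $$ (b, r mod d) * xs c $$ (a, b) else 0)"
    by (intro sum.cong refl) auto
  also have "\<dots> = (\<Sum>b<d. h $$ (b, r mod d) * xs c $$ (r div d, b))"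
    using divmod_less[OF r] by simp
  also have "\<dots> = (xs c * h) $$ (r div d, r mod d)"
    using h xc divmod_less[OF r] by (simp add: scalar_prod_def atLeast0LessThan mult.commute)
  finally show "coord_mat d (\<lambda>c. xs c * h) $$ (r, c) = (right_mult_mat d h * coord_mat d xs) $$ (r, c)"
    using r c by (simp add: coord_mat_def)
qed (auto simp: right_mult_mat_def coord_mat_def)

lemma coord_mat_elem_mat: "coord_mat d (elem_mat d) = 1\<^sub>m (d*d)"
proof (rule eq_matI)
  fix r c assume "r < dim_row (1\<^sub>m (d*d))" and "c < dim_col (1\<^sub>m (d * d))"
  then have r: "r < d*d" and c: "c < d*d" by auto
  have "r div d = c div d \<and> r mod d = c mod d \<longleftrightarrow> r = c"
    by (metis div_mult_mod_eq)
  then show "coord_mat d (elem_mat d) $$ (r, c) = 1\<^sub>m (d * d) $$ (r, c)"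
    using r c divmod_less[OF r] by (auto simp: coord_mat_def elem_mat_def)
qed (auto simp: coord_mat_def)

definition block_diag_mat :: "nat \<Rightarrow> nat \<Rightarrow> 'a::comm_ring_1 mat \<Rightarrow> 'a mat" where
  "block_diag_mat k d B =
     mat (k*d) (k*d) (\<lambda>(r, q). if r div d = q div d then B $$ (r mod d, q mod d) else 0)"

lemma block_diag_mat_Suc:
  assumes B: "B \<in> carrier_mat d d"
  shows "block_diag_mat (Suc k) d B
    = four_block_mat B (0\<^sub>m d (k*d)) (0\<^sub>m (k*d) d) (block_diag_mat k d B)"
proof (rule eq_matI)
  fix r q assume "r < dim_row (four_block_mat B (0\<^sub>m d (k*d)) (0\<^sub>m (k*d) d) (block_diag_mat k d B))"
    and "q < dim_col (four_block_mat B (0\<^sub>m d (k*d)) (0\<^sub>m (k*d) d) (block_diag_mat k d B))"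
  then have r: "r < d + k*d" and q: "q < d + k*d" using B by (auto simp: block_diag_mat_def)
  then have "d > 0" by (cases d) auto
  with r q B show "block_diag_mat (Suc k) d B $$ (r, q)
      = four_block_mat B (0\<^sub>m d (k*d)) (0\<^sub>m (k*d) d) (block_diag_mat k d B) $$ (r, q)"
    by (auto simp: block_diag_mat_def div_if mod_if)
qed (use B in \<open>auto simp: block_diag_mat_def\<close>)

lemma det_block_diag_mat:
  assumes B: "B \<in> carrier_mat d d"
  shows "det (block_diag_mat k d (B :: 'a::idom mat)) = det B ^ k"
proof (induct k)
  case 0
  have "block_diag_mat 0 d B = 1\<^sub>m 0" by (rule eq_matI) (auto simp: block_diag_mat_def)
  then show ?case by simp
next
  case (Suc k)
  have "det (block_diag_mat (Suc k) d B) = det B * det (block_diag_mat k d B)"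
    unfolding block_diag_mat_Suc[OF B]
    by (rule det_four_block_mat_lower_left_zero[OF B]) (auto simp: block_diag_mat_def)
  then show ?case using Suc.hyps by simp
qed

lemma det_right_mult_mat:
  assumes "h \<in> carrier_mat d d"
  shows "det (right_mult_mat d (h :: 'a::idom mat)) = det h ^ d"
proof -
  have "right_mult_mat d h = block_diag_mat d d (transpose_mat h)"
    using assms by (intro eq_matI) (auto simp: right_mult_mat_def block_diag_mat_def divmod_less)
  then show ?thesis using assms by (simp add: det_block_diag_mat det_transpose)
qed

text \<open>Transposition of d x d matrices in the coordinates of coord_mat; it conjugates
  left multiplication by g into right multiplication by the transpose of g.\<close>

definition swap_coord :: "nat \<Rightarrow> nat \<Rightarrow> nat" where
  "swap_coord d r = (r mod d) * d + r div d"

lemma swap_coord: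
  fixes d r :: nat
  assumes r: "r < d * d"
  shows "swap_coord d r < d * d" and "swap_coord d r div d = r mod d"
    and "swap_coord d r mod d = r div d" and "swap_coord d (swap_coord d r) = r"
proof -
  have a: "r div d < d" "r mod d < d" using divmod_less[OF r] by auto
  show "swap_coord d r < d * d" unfolding swap_coord_def using mult_add_less_square[OF a(2) a(1)] .
  show b: "swap_coord d r div d = r mod d" unfolding swap_coord_def using a by simp
  show b2: "swap_coord d r mod d = r div d" unfolding swap_coord_def using a(1) by simp
  show "swap_coord d (swap_coord d r) = r" unfolding swap_coord_def[of d "swap_coord d r"] b b2 by simp
qed

lemma swap_coord_eq_iff:
  fixes r s d :: nat
  assumes "r < d * d" and "s < d * d"
  shows "r = swap_coord d s \<longleftrightarrow> s = swap_coord d r"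
  using swap_coord(4)[OF assms(1)] swap_coord(4)[OF assms(2)] by auto

definition swap_coord_mat :: "nat \<Rightarrow> 'a::comm_ring_1 mat" where
  "swap_coord_mat d = mat (d*d) (d*d) (\<lambda>(r, q). if q = swap_coord d r then 1 else 0)"

lemma swap_coord_mat_mult_left:
  assumes A: "A \<in> carrier_mat (d*d) (d*d)"
  shows "swap_coord_mat d * A = mat (d*d) (d*d) (\<lambda>(r, q). A $$ (swap_coord d r, q))"
proof (rule eq_matI)
  fix r q assume "r < dim_row (mat (d*d) (d*d) (\<lambda>(r, q). A $$ (swap_coord d r, q)))"
    and "q < dim_col (mat (d*d) (d*d) (\<lambda>(r, q). A $$ (swap_coord d r, q)))"
  then have r: "r < d*d" and q: "q < d*d" by auto
  have "(swap_coord_mat d * A) $$ (r, q) = (\<Sum>s<d*d. (if s = swap_coord d r then 1 else 0) * A $$ (s, q))"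
    using A r q by (simp add: swap_coord_mat_def scalar_prod_def atLeast0LessThan)
  also have "\<dots> = (\<Sum>s<d*d. if s = swap_coord d r then A $$ (s, q) else 0)"
    by (intro sum.cong refl) auto
  also have "\<dots> = A $$ (swap_coord d r, q)" using swap_coord[OF r] by simp
  finally show "(swap_coord_mat d * A) $$ (r, q) = mat (d*d) (d*d) (\<lambda>(r, q). A $$ (swap_coord d r, q)) $$ (r, q)"
    using r q by simp
qed (use A in \<open>auto simp: swap_coord_mat_def\<close>)

lemma swap_coord_mat_mult_right:
  assumes A: "A \<in> carrier_mat (d*d) (d*d)"
  shows "A * swap_coord_mat d = mat (d*d) (d*d) (\<lambda>(r, q). A $$ (r, swap_coord d q))"
proof (rule eq_matI)
  fix r q assume "r < dim_row (mat (d*d) (d*d) (\<lambda>(r, q). A $$ (r, swap_coord d q)))"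
    and "q < dim_col (mat (d*d) (d*d) (\<lambda>(r, q). A $$ (r, swap_coord d q)))"
  then have r: "r < d*d" and q: "q < d*d" by auto
  have "(A * swap_coord_mat d) $$ (r, q) = (\<Sum>s<d*d. A $$ (r, s) * (if q = swap_coord d s then 1 else 0))"
    using A r q by (simp add: swap_coord_mat_def scalar_prod_def atLeast0LessThan)
  also have "\<dots> = (\<Sum>s<d*d. if s = swap_coord d q then A $$ (r, s) else 0)"
    using q by (intro sum.cong refl) (auto simp: swap_coord_eq_iff)
  also have "\<dots> = A $$ (r, swap_coord d q)" using swap_coord[OF q] by simp
  finally show "(A * swap_coord_mat d) $$ (r, q) = mat (d*d) (d*d) (\<lambda>(r, q). A $$ (r, swap_coord d q)) $$ (r, q)"
    using r q by simp
qed (use A in \<open>auto simp: swap_coord_mat_def\<close>)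

lemma det_left_mult_mat:
  assumes g: "g \<in> carrier_mat d d"
  shows "det (left_mult_mat d (g :: 'a::field mat)) = det g ^ d"
proof -
  let ?P = "swap_coord_mat d :: 'a mat" and ?R = "right_mult_mat d (transpose_mat g)"
  have P: "?P \<in> carrier_mat (d*d) (d*d)" by (simp add: swap_coord_mat_def)
  have L: "left_mult_mat d g \<in> carrier_mat (d*d) (d*d)" by (simp add: left_mult_mat_def)
  have R: "?R \<in> carrier_mat (d*d) (d*d)" by (simp add: right_mult_mat_def)
  have "?P * ?P = 1\<^sub>m (d*d)"
    unfolding swap_coord_mat_mult_left[OF P] by (rule eq_matI) (auto simp: swap_coord_mat_def swap_coord)
  then have "det ?P * det ?P = 1" using det_mult[OF P P] by simp
  then have P0: "det ?P \<noteq> 0" by auto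
  have comm: "?P * left_mult_mat d g = ?R * ?P"
    unfolding swap_coord_mat_mult_left[OF L] swap_coord_mat_mult_right[OF R]
    using g by (intro eq_matI) (auto simp: left_mult_mat_def right_mult_mat_def swap_coord divmod_less)
  have "det ?P * det (left_mult_mat d g) = det (?P * left_mult_mat d g)"
    using det_mult[OF P L] by simp
  also have "\<dots> = det (?R * ?P)" using comm by simp
  also have "\<dots> = det ?R * det ?P" by (rule det_mult[OF R P])
  finally have "det ?P * det (left_mult_mat d g) = det ?P * det ?R" by (simp add: mult.commute)
  then have "det (left_mult_mat d g) = det ?R" using P0 by simp
  also have "\<dots> = det g ^ d" using g by (simp add: det_right_mult_mat det_transpose)
  finally show ?thesis .
qed

lemma det_coords_conj_elem_mat:
  assumes g: "g \<in> carrier_mat d d" and h: "h \<in> carrier_mat d d" and gh: "g * h = 1\<^sub>m d"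
  shows "det_coords d (\<lambda>c. g * elem_mat d c * (h :: 'a::field mat)) = 1"
proof -
  have e: "\<forall>c<d*d. elem_mat d c * h \<in> carrier_mat d d"
    using h by (metis elem_mat_carrier mult_carrier_mat)
  have "(\<lambda>c. g * elem_mat d c * h) = (\<lambda>c. g * (elem_mat d c * h))"
    using g h by (auto simp: fun_eq_iff assoc_mult_mat[of _ d d _ d _ d])
  then have "coord_mat d (\<lambda>c. g * elem_mat d c * h)
      = left_mult_mat d g * (right_mult_mat d h * coord_mat d (elem_mat d))"
    using coord_mat_mult_left[OF g e] coord_mat_mult_right[OF h, of "elem_mat d"] by simp
  also have "\<dots> = left_mult_mat d g * right_mult_mat d h"
    by (simp add: coord_mat_elem_mat right_mult_mat_def)
  finally have "det_coords d (\<lambda>c. g * elem_mat d c * h)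
      = det (left_mult_mat d g) * det (right_mult_mat d h)"
    unfolding det_coords_eq_det_coord_mat
    by (simp add: det_mult[of _ "d*d"] left_mult_mat_def right_mult_mat_def)
  also have "\<dots> = (det g * det h) ^ d"
    using g h by (simp add: det_left_mult_mat det_right_mult_mat power_mult_distrib)
  also have "det g * det h = 1" using det_mult[OF g h] gh by simp
  finally show ?thesis by simp
qed

section \<open>Evaluation of tensor polynomials\<close>

lemma word_mat_carrier:
  "(\<forall>v\<in>set w. xs v \<in> carrier_mat d d) \<Longrightarrow> word_mat d xs w \<in> carrier_mat d d"
  by (induct w) (auto simp: word_mat_def)

lemma word_mat_cong: "(\<forall>v\<in>set w. xs v = ys v) \<Longrightarrow> word_mat d xs w = word_mat d ys w"
  by (induct w) (auto simp: word_mat_def)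

lemma word_mat_conj:
  assumes g: "g \<in> carrier_mat d d" and h: "h \<in> carrier_mat d d" and gh: "g * h = 1\<^sub>m d"
    and hg: "h * g = 1\<^sub>m d" and xs: "\<forall>v\<in>set w. xs v \<in> carrier_mat d d"
  shows "word_mat d (\<lambda>v. g * xs v * h) w = g * word_mat d xs w * h"
  using xs
proof (induct w)
  case Nil
  then show ?case using g h gh by (simp add: word_mat_def)
next
  case (Cons v w)
  let ?W = "word_mat d xs w"
  have W: "?W \<in> carrier_mat d d" using Cons by (intro word_mat_carrier) auto
  have X: "xs v \<in> carrier_mat d d" using Cons by auto
  have "word_mat d (\<lambda>v. g * xs v * h) (v # w) = (g * xs v * h) * (g * ?W * h)"
    using Cons by (simp add: word_mat_def)
  also have "\<dots> = g * xs v * (h * g) * ?W * h"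
    using g h W X by (simp add: assoc_mult_mat[of _ d d _ d _ d])
  also have "\<dots> = g * (xs v * ?W) * h"
    using g h W X hg by (simp add: assoc_mult_mat[of _ d d _ d _ d])
  also have "\<dots> = g * word_mat d xs (v # w) * h" by (simp add: word_mat_def)
  finally show ?case .
qed

lemma tensor_poly_letter_less:
  assumes "tensor_poly d n G" and "G m \<noteq> 0" and "k < n" and "v \<in> set (m ! k)"
  shows "v < d * d"
  using assms unfolding tensor_poly_def by (metis nth_mem)

lemma teval_cong:
  assumes "tensor_poly d n G" and "\<forall>k<d*d. xs k = ys k"
  shows "teval d n G xs = teval d n G ys"
proof -
  have "word_mat d xs (m ! k) = word_mat d ys (m ! k)" if "G m \<noteq> 0" "k < n" for m k
    using tensor_poly_letter_less[OF assms(1) that] assms(2) by (intro word_mat_cong) auto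
  then show ?thesis unfolding teval_def by (auto simp: fun_eq_iff intro!: sum.cong prod.cong)
qed

lemma teval_eq_sum_tensor_mats:
  "teval d n G xs = (\<lambda>a b. \<Sum>m | G m \<noteq> 0. G m * tensor_mats n (\<lambda>k. word_mat d xs (m ! k)) a b)"
  unfolding teval_def tensor_mats_def by simp

lemma teval_conj:
  assumes tp: "tensor_poly d n G" and xs: "\<forall>k<d*d. xs k \<in> carrier_mat d d"
    and g: "g \<in> carrier_mat d d" and h: "h \<in> carrier_mat d d" and gh: "g * h = 1\<^sub>m d"
    and hg: "h * g = 1\<^sub>m d" and x: "x \<in> idx d n" and y: "y \<in> idx d n"
  shows "teval d n G (\<lambda>v. g * xs v * h) x y
       = tmul d n (tmul d n (tpow n g) (teval d n G xs)) (tpow n h) x y"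
proof -
  let ?S = "{m. G m \<noteq> 0}"
  let ?W = "\<lambda>m k. word_mat d xs (m ! k)"
  have W: "?W m k \<in> carrier_mat d d" if "m \<in> ?S" "k < n" for m k
    using that tensor_poly_letter_less[OF tp] xs by (intro word_mat_carrier) auto
  have left: "tmul d n (tpow n g) (teval d n G xs) a b
      = (\<Sum>m\<in>?S. G m * tensor_mats n (\<lambda>k. g * ?W m k) a b)" if "a \<in> idx d n" "b \<in> idx d n" for a b
  proof -
    have "tmul d n (tpow n g) (teval d n G xs) a b
        = (\<Sum>m\<in>?S. G m * tmul d n (tpow n g) (tensor_mats n (?W m)) a b)"
      unfolding teval_eq_sum_tensor_mats by (rule tmul_sum_right)
    also have "\<dots> = (\<Sum>m\<in>?S. G m * tensor_mats n (\<lambda>k. g * ?W m k) a b)"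
      using that g W unfolding tpow_eq_tensor_mats
      by (intro sum.cong refl) (subst tmul_tensor_mats[of _ d], auto)
    finally show ?thesis .
  qed
  have "tmul d n (tmul d n (tpow n g) (teval d n G xs)) (tpow n h) x y
      = tmul d n (\<lambda>a b. \<Sum>m\<in>?S. G m * tensor_mats n (\<lambda>k. g * ?W m k) a b) (tpow n h) x y"
    using left x by (intro tmul_cong) auto
  also have "\<dots> = (\<Sum>m\<in>?S. G m * tmul d n (tensor_mats n (\<lambda>k. g * ?W m k)) (tpow n h) x y)"
    by (rule tmul_sum_left)
  also have "\<dots> = (\<Sum>m\<in>?S. G m * tensor_mats n (\<lambda>k. g * ?W m k * h) x y)"
    using x y g h W unfolding tpow_eq_tensor_mats
    by (intro sum.cong refl) (subst tmul_tensor_mats[of _ d], auto)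
  also have "\<dots> = (\<Sum>m\<in>?S. G m * tensor_mats n (\<lambda>k. word_mat d (\<lambda>v. g * xs v * h) (m ! k)) x y)"
    unfolding tensor_mats_def using tensor_poly_letter_less[OF tp] xs
    by (intro sum.cong refl arg_cong2[where f = "(*)"] prod.cong refl)
       (subst word_mat_conj[OF g h gh hg], auto)
  also have "\<dots> = teval d n G (\<lambda>v. g * xs v * h) x y"
    unfolding teval_eq_sum_tensor_mats ..
  finally show ?thesis by simp
qed

lemma teval_alternating_form:
  fixes G :: "nat list list \<Rightarrow> 'a::comm_ring_1"
  assumes "tensor_poly d n G" and "multilinear_alternating d n (teval d n G)"
    and "x \<in> idx d n" and "y \<in> idx d n"
  shows "alternating_form d (\<lambda>xs. teval d n G xs x y)"
  unfolding alternating_form_def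
proof (intro conjI allI impI)
  fix xs :: "nat \<Rightarrow> 'a mat" and i :: nat and Y Z :: "'a mat" and a b :: 'a
  assume xs: "\<forall>k<d*d. xs k \<in> carrier_mat d d" and "i < d * d"
    and "Y \<in> carrier_mat d d" and "Z \<in> carrier_mat d d"
  from assms(2)[unfolded multilinear_alternating_def, THEN conjunct1, rule_format,
      OF xs[rule_format] this(2-4) assms(3,4)]
  show "teval d n G (xs(i := a \<cdot>\<^sub>m Y + b \<cdot>\<^sub>m Z)) x y
      = a * teval d n G (xs(i := Y)) x y + b * teval d n G (xs(i := Z)) x y" .
next
  fix xs :: "nat \<Rightarrow> 'a mat" and i j :: nat
  assume xs: "\<forall>k<d*d. xs k \<in> carrier_mat d d" and "i < d * d" and "j < d * d" and "i \<noteq> j"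
    and "xs i = xs j"
  from assms(2)[unfolded multilinear_alternating_def, THEN conjunct2, rule_format,
      OF xs[rule_format] this(2-5) assms(3,4)]
  show "teval d n G xs x y = 0" .
next
  fix xs ys :: "nat \<Rightarrow> 'a mat"
  assume "\<forall>k<d*d. xs k = ys k"
  then have "teval d n G xs = teval d n G ys" by (rule teval_cong[OF assms(1)])
  then show "teval d n G xs x y = teval d n G ys x y" by simp
qed

lemma teval_eq_det_coords:
  fixes G :: "nat list list \<Rightarrow> 'a::field"
  assumes "tensor_poly d n G" and "multilinear_alternating d n (teval d n G)"
    and "\<forall>k<d*d. xs k \<in> carrier_mat d d" and "x \<in> idx d n" and "y \<in> idx d n"
  shows "teval d n G xs x y = det_coords d xs * teval d n G (elem_mat d) x y"
  using alternating_form_eq_det_coords[OF teval_alternating_form[OF assms(1,2,4,5)] assms(3)] .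

lemma GL_invariant_teval_elem_mat:
  fixes G :: "nat list list \<Rightarrow> 'a::field"
  assumes tp: "tensor_poly d n G" and ma: "multilinear_alternating d n (teval d n G)"
  shows "GL_invariant d n (teval d n G (elem_mat d))"
  unfolding GL_invariant_def
proof (intro allI impI ballI)
  fix g h :: "'a mat" and x y
  assume g: "g \<in> carrier_mat d d" and h: "h \<in> carrier_mat d d" and gh: "g * h = 1\<^sub>m d"
    and hg: "h * g = 1\<^sub>m d" and x: "x \<in> idx d n" and y: "y \<in> idx d n"
  have "tmul d n (tmul d n (tpow n g) (teval d n G (elem_mat d))) (tpow n h) x y
      = teval d n G (\<lambda>c. g * elem_mat d c * h) x y"
    by (rule teval_conj[OF tp _ g h gh hg x y, symmetric]) simp
  also have "\<dots> = det_coords d (\<lambda>c. g * elem_mat d c * h) * teval d n G (elem_mat d) x y"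
    using g h by (intro teval_eq_det_coords[OF tp ma _ x y]) auto
  also have "det_coords d (\<lambda>c. g * elem_mat d c * h) = 1"
    by (rule det_coords_conj_elem_mat[OF g h gh])
  finally show "tmul d n (tmul d n (tpow n g) (teval d n G (elem_mat d))) (tpow n h) x y
      = teval d n G (elem_mat d) x y"
    by simp
qed

section \<open>From invertible to arbitrary matrices\<close>

lemma finite_det_shift_zeros:
  assumes X: "X \<in> carrier_mat d d"
  shows "finite {t. det (X + t \<cdot>\<^sub>m 1\<^sub>m d) = (0::'a::field_char_0)}"
proof -
  have cp: "char_poly X \<noteq> 0"
  proof
    assume "char_poly X = 0"
    then show False using degree_monic_char_poly[OF X] by simp
  qed
  have sub: "{t. det (X + t \<cdot>\<^sub>m 1\<^sub>m d) = 0} \<subseteq> uminus ` {s. poly (char_poly X) s = 0}"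
  proof
    fix t assume "t \<in> {t. det (X + t \<cdot>\<^sub>m 1\<^sub>m d) = 0}"
    then have t0: "det (X + t \<cdot>\<^sub>m 1\<^sub>m d) = 0" by simp
    have cm: "char_matrix X (-t) = X + t \<cdot>\<^sub>m 1\<^sub>m d" using X by (simp add: char_matrix_def)
    have "- (X + t \<cdot>\<^sub>m 1\<^sub>m d) = (-1) \<cdot>\<^sub>m (X + t \<cdot>\<^sub>m 1\<^sub>m d)"
      using X by (intro eq_matI) auto
    then have "poly (char_poly X) (-t) = (-1) ^ d * det (X + t \<cdot>\<^sub>m 1\<^sub>m d)"
      using char_poly_matrix[OF X, of "-t"] X by (simp add: cm)
    then have "poly (char_poly X) (-t) = 0" using t0 by simp
    then show "t \<in> uminus ` {s. poly (char_poly X) s = 0}" by (auto intro: image_eqI[of _ _ "-t"])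
  qed
  show ?thesis by (rule finite_subset[OF sub]) (use poly_roots_finite[OF cp] in auto)
qed

lemma det_nonzero_imp_inverse:
  assumes "g \<in> carrier_mat d d" and "det g \<noteq> (0::'a::field)"
  obtains h where "h \<in> carrier_mat d d" and "g * h = 1\<^sub>m d" and "h * g = 1\<^sub>m d"
proof -
  have "g \<in> Units (ring_mat TYPE('a) d ())" by (rule det_non_zero_imp_unit[OF assms])
  then have "\<exists>h. h \<in> carrier_mat d d \<and> g * h = 1\<^sub>m d \<and> h * g = 1\<^sub>m d"
    unfolding Units_def by (auto simp: ring_mat_simps)
  then show ?thesis using that by blast
qed

text \<open>The entries of (X + t 1)^{\<otimes>n} T - T (X + t 1)^{\<otimes>n} are polynomials in t that vanish
  whenever X + t 1 is invertible, i.e. for all but finitely many t; so they vanish at t = 0.\<close>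

lemma tcommute_tpow_if_tcommute_invertible:
  fixes T :: "nat list \<Rightarrow> nat list \<Rightarrow> 'a::field_char_0"
  assumes inv: "\<And>g h. g \<in> carrier_mat d d \<Longrightarrow> h \<in> carrier_mat d d \<Longrightarrow> g * h = 1\<^sub>m d \<Longrightarrow>
      h * g = 1\<^sub>m d \<Longrightarrow> tcommute d n (tpow n g) T"
    and X: "X \<in> carrier_mat d d"
  shows "tcommute d n (tpow n X) T"
  unfolding tcommute_def
proof (intro ballI)
  fix x y assume x: "x \<in> idx d n" and y: "y \<in> idx d n"
  define P where "P z w = (\<Prod>k<n. [:X $$ (z ! k, w ! k), if z ! k = w ! k then 1 else 0:])" for z w
  have P: "poly (P z w) t = tpow n (X + t \<cdot>\<^sub>m 1\<^sub>m d) z w"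
    if "z \<in> idx d n" "w \<in> idx d n" for z w t
    unfolding P_def tpow_def poly_prod using that X by (intro prod.cong refl) (auto simp: idx_iff)
  define Q where "Q = (\<Sum>z\<in>idx d n. P x z * [:T z y:]) - (\<Sum>z\<in>idx d n. [:T x z:] * P z y)"
  have Q: "poly Q t = tmul d n (tpow n (X + t \<cdot>\<^sub>m 1\<^sub>m d)) T x y - tmul d n T (tpow n (X + t \<cdot>\<^sub>m 1\<^sub>m d)) x y"
    for t
    unfolding Q_def tmul_def poly_diff poly_sum poly_mult using x y by (simp add: P)
  have root: "poly Q t = 0" if "det (X + t \<cdot>\<^sub>m 1\<^sub>m d) \<noteq> 0" for t
  proof -
    have "X + t \<cdot>\<^sub>m 1\<^sub>m d \<in> carrier_mat d d" using X by simp
    from det_nonzero_imp_inverse[OF this that] inv this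
    have "tcommute d n (tpow n (X + t \<cdot>\<^sub>m 1\<^sub>m d)) T" by metis
    then show ?thesis unfolding Q tcommute_def using x y by simp
  qed
  have "Q = 0"
  proof (rule ccontr)
    assume "Q \<noteq> 0"
    then have "finite {t. poly Q t = 0}" by (rule poly_roots_finite)
    moreover have "UNIV \<subseteq> {t. poly Q t = 0} \<union> {t. det (X + t \<cdot>\<^sub>m 1\<^sub>m d) = 0}"
      using root by auto
    ultimately have "finite (UNIV :: 'a set)"
      using finite_det_shift_zeros[OF X] by (meson finite_Un finite_subset)
    then show False using infinite_UNIV_char_0 by blast
  qed
  moreover have "X + 0 \<cdot>\<^sub>m 1\<^sub>m d = X" using X by (intro eq_matI) auto
  ultimately show "tmul d n (tpow n X) T x y = tmul d n T (tpow n X) x y"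
    using Q[of 0] by simp
qed

section \<open>Polarization\<close>

lemma surj_on_PiE_eq_inj_on:
  "{g \<in> {..<n} \<rightarrow>\<^sub>E {..<n}. g ` {..<n} = {..<n}} = {g \<in> {..<n} \<rightarrow>\<^sub>E {..<n::nat}. inj_on g {..<n}}"
proof (rule subset_antisym; rule subsetI)
  fix g assume "g \<in> {g \<in> {..<n} \<rightarrow>\<^sub>E {..<n}. g ` {..<n} = {..<n}}"
  then show "g \<in> {g \<in> {..<n} \<rightarrow>\<^sub>E {..<n}. inj_on g {..<n}}"
    by (auto intro: eq_card_imp_inj_on)
next
  fix g assume g: "g \<in> {g \<in> {..<n} \<rightarrow>\<^sub>E {..<n}. inj_on g {..<n}}"
  then have "g ` {..<n} = {..<n}" by (intro endo_inj_surj) auto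
  then show "g \<in> {g \<in> {..<n} \<rightarrow>\<^sub>E {..<n}. g ` {..<n} = {..<n}}" using g by auto
qed

lemma prod_sum_eq_sum_Pow_images:
  fixes n :: nat
  assumes "finite S"
  shows "(\<Prod>k<n. \<Sum>i\<in>S. z i k)
    = (\<Sum>U\<in>Pow S. \<Sum>g\<in>{g \<in> {..<n} \<rightarrow>\<^sub>E U. g ` {..<n} = U}. \<Prod>k<n. (z (g k) k :: 'a::comm_ring_1))"
proof -
  have "(\<Prod>k<n. \<Sum>i\<in>S. z i k) = (\<Sum>g\<in>{..<n} \<rightarrow>\<^sub>E S. \<Prod>k<n. z (g k) k)"
    using assms by (subst prod_sum_PiE) auto
  also have "\<dots> = (\<Sum>U\<in>Pow S. \<Sum>g\<in>{g \<in> {..<n} \<rightarrow>\<^sub>E S. g ` {..<n} = U}. \<Prod>k<n. z (g k) k)"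
    by (rule sum.group[symmetric]) (use assms in \<open>auto intro!: finite_PiE\<close>)
  also have "\<dots> = (\<Sum>U\<in>Pow S. \<Sum>g\<in>{g \<in> {..<n} \<rightarrow>\<^sub>E U. g ` {..<n} = U}. \<Prod>k<n. z (g k) k)"
  proof (rule sum.cong[OF refl])
    fix U assume "U \<in> Pow S"
    then have "{g \<in> {..<n} \<rightarrow>\<^sub>E S. g ` {..<n} = U} = {g \<in> {..<n} \<rightarrow>\<^sub>E U. g ` {..<n} = U}"
      by (auto simp: PiE_def Pi_def)
    then show "(\<Sum>g\<in>{g \<in> {..<n} \<rightarrow>\<^sub>E S. g ` {..<n} = U}. \<Prod>k<n. z (g k) k)
        = (\<Sum>g\<in>{g \<in> {..<n} \<rightarrow>\<^sub>E U. g ` {..<n} = U}. \<Prod>k<n. z (g k) k)"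
      by simp
  qed
  finally show ?thesis .
qed

lemma permanent_inclusion_exclusion:
  fixes z :: "nat \<Rightarrow> nat \<Rightarrow> 'a::comm_ring_1"
  shows "(\<Sum>\<sigma> | \<sigma> permutes {..<n}. \<Prod>k<n. z (\<sigma> k) k)
       = (\<Sum>S\<in>Pow {..<n}. (-1) ^ (n - card S) * (\<Prod>k<n. \<Sum>i\<in>S. z i k))"
proof -
  define f where "f U = (\<Sum>g\<in>{g \<in> {..<n} \<rightarrow>\<^sub>E U. g ` {..<n} = U}. \<Prod>k<n. z (g k) k)" for U
  have "(\<Sum>\<sigma> | \<sigma> permutes {..<n}. \<Prod>k<n. z (\<sigma> k) k)
      = (\<Sum>\<sigma> | \<sigma> permutes {..<n}. \<Prod>k<n. z (restrict \<sigma> {..<n} k) k)"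
    by (intro sum.cong refl prod.cong) auto
  also have "\<dots> = f {..<n}"
    unfolding f_def surj_on_PiE_eq_inj_on by (rule sum_inj_PiE_eq_sum_permutes[symmetric])
  also have "\<dots> = (\<Sum>S\<in>Pow {..<n}. (-1) ^ (card {..<n} - card S) * (\<Prod>k<n. \<Sum>i\<in>S. z i k))"
  proof (rule inclusion_exclusion_mobius)
    show "(\<Prod>k<n. \<Sum>i\<in>S. z i k) = sum f (Pow S)" if "finite S" for S
      unfolding f_def by (rule prod_sum_eq_sum_Pow_images[OF that])
  qed simp
  finally show ?thesis by simp
qed

definition orbit_op :: "nat \<Rightarrow> nat list \<Rightarrow> nat list \<Rightarrow> nat list \<Rightarrow> nat list \<Rightarrow> 'a::comm_ring_1" where
  "orbit_op n a b x y =
     (\<Sum>\<sigma> | \<sigma> permutes {..<n}. if x = permute_list \<sigma> a \<and> y = permute_list \<sigma> b then 1 else 0)"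

definition unit_sum_mat :: "nat \<Rightarrow> nat list \<Rightarrow> nat list \<Rightarrow> nat set \<Rightarrow> 'a::comm_ring_1 mat" where
  "unit_sum_mat d a b S = mat d d (\<lambda>(i, j). \<Sum>k\<in>S. if i = a ! k \<and> j = b ! k then 1 else 0)"

lemma orbit_op_eq_sum_tpow:
  assumes a: "length a = n" and b: "length b = n" and x: "x \<in> idx d n" and y: "y \<in> idx d n"
  shows "orbit_op n a b x y
    = (\<Sum>S\<in>Pow {..<n}. (-1) ^ (n - card S) * tpow n (unit_sum_mat d a b S) x y)"
proof -
  define z where "z i k = (if x ! k = a ! i \<and> y ! k = b ! i then 1 else (0::'a))" for i k
  have lx: "length x = n" "length y = n" using x y by (auto simp: idx_iff)
  have "orbit_op n a b x y = (\<Sum>\<sigma> | \<sigma> permutes {..<n}. \<Prod>k<n. z (\<sigma> k) k)"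
    unfolding orbit_op_def
  proof (intro sum.cong refl)
    fix \<sigma>
    show "(if x = permute_list \<sigma> a \<and> y = permute_list \<sigma> b then 1 else 0) = (\<Prod>k<n. z (\<sigma> k) k)"
    proof (cases "\<forall>k<n. x ! k = a ! \<sigma> k \<and> y ! k = b ! \<sigma> k")
      case True
      then show ?thesis using lx a b by (auto simp: z_def eq_permute_list_iff_nth intro!: prod.neutral)
    next
      case False
      then obtain k where "k < n" "\<not> (x ! k = a ! \<sigma> k \<and> y ! k = b ! \<sigma> k)" by blast
      then have "(\<Prod>k<n. z (\<sigma> k) k) = 0" unfolding z_def by (intro prod_zero) auto
      then show ?thesis using False lx a b by (auto simp: eq_permute_list_iff_nth)
    qed
  qed
  also have "\<dots> = (\<Sum>S\<in>Pow {..<n}. (-1) ^ (n - card S) * (\<Prod>k<n. \<Sum>i\<in>S. z i k))"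
    by (rule permanent_inclusion_exclusion)
  also have "\<dots> = (\<Sum>S\<in>Pow {..<n}. (-1) ^ (n - card S) * tpow n (unit_sum_mat d a b S) x y)"
    unfolding tpow_def unit_sum_mat_def z_def using x y
    by (intro sum.cong refl arg_cong2[where f = "(*)"] prod.cong) (auto simp: idx_iff)
  finally show ?thesis .
qed

lemma tcommute_orbit_op:
  assumes T: "\<And>X. X \<in> carrier_mat d d \<Longrightarrow> tcommute d n (tpow n X) T"
    and ab: "length a = n" "length b = n"
  shows "tcommute d n (orbit_op n a b) T"
proof (rule tcommute_sum[where S = "Pow {..<n}" and c = "\<lambda>S. (-1) ^ (n - card S)"
      and A = "\<lambda>S. tpow n (unit_sum_mat d a b S)"])
  show "tcommute d n (tpow n (unit_sum_mat d a b S)) T" for S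
    by (rule T) (simp add: unit_sum_mat_def)
  show "orbit_op n a b x y = (\<Sum>S\<in>Pow {..<n}. (-1) ^ (n - card S) * tpow n (unit_sum_mat d a b S) x y)"
    if "x \<in> idx d n" "y \<in> idx d n" for x y
    using orbit_op_eq_sum_tpow[OF ab that] .
qed

lemma perm_invariant_eq_sum_orbit_op:
  fixes Y :: "nat list \<Rightarrow> nat list \<Rightarrow> 'a::field_char_0"
  assumes Y: "perm_invariant d n Y" and x: "x \<in> idx d n" and y: "y \<in> idx d n"
  shows "Y x y = (\<Sum>q\<in>idx d n \<times> idx d n. Y (fst q) (snd q) / fact n * orbit_op n (fst q) (snd q) x y)"
proof -
  let ?I = "idx d n \<times> idx d n"
  let ?inv = "Hilbert_Choice.inv"
  have lx: "length x = n" "length y = n" using x y by (auto simp: idx_iff)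
  have "(\<Sum>q\<in>?I. Y (fst q) (snd q) * orbit_op n (fst q) (snd q) x y)
      = (\<Sum>q\<in>?I. \<Sum>\<sigma> | \<sigma> permutes {..<n}. if fst q = permute_list (?inv \<sigma>) x
           \<and> snd q = permute_list (?inv \<sigma>) y then Y (fst q) (snd q) else 0)"
  proof (intro sum.cong refl)
    fix q assume "q \<in> ?I"
    then have lq: "length (fst q) = n" "length (snd q) = n" by (auto simp: idx_iff)
    show "Y (fst q) (snd q) * orbit_op n (fst q) (snd q) x y
        = (\<Sum>\<sigma> | \<sigma> permutes {..<n}. if fst q = permute_list (?inv \<sigma>) x
             \<and> snd q = permute_list (?inv \<sigma>) y then Y (fst q) (snd q) else 0)"
      unfolding orbit_op_def sum_distrib_left
    proof (intro sum.cong refl)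
      fix \<sigma> assume "\<sigma> \<in> {\<sigma>. \<sigma> permutes {..<n}}"
      then have s: "\<sigma> permutes {..<n}" by simp
      have i1: "x = permute_list \<sigma> (fst q) \<longleftrightarrow> fst q = permute_list (?inv \<sigma>) x"
        using s lq lx by (intro eq_permute_list_iff_inv) simp_all
      have i2: "y = permute_list \<sigma> (snd q) \<longleftrightarrow> snd q = permute_list (?inv \<sigma>) y"
        using s lq lx by (intro eq_permute_list_iff_inv) simp_all
      show "Y (fst q) (snd q) * (if x = permute_list \<sigma> (fst q) \<and> y = permute_list \<sigma> (snd q)
          then 1 else 0) = (if fst q = permute_list (?inv \<sigma>) x \<and> snd q = permute_list (?inv \<sigma>) y
          then Y (fst q) (snd q) else 0)"
        unfolding i1 i2 by simp
    qed
  qed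
  also have "\<dots> = (\<Sum>\<sigma> | \<sigma> permutes {..<n}. \<Sum>q\<in>?I.
      if q = (permute_list (?inv \<sigma>) x, permute_list (?inv \<sigma>) y) then Y (fst q) (snd q) else 0)"
    by (subst sum.swap) (simp add: prod_eq_iff)
  also have "\<dots> = (\<Sum>\<sigma> | \<sigma> permutes {..<n}. Y x y)"
  proof (intro sum.cong refl)
    fix \<sigma> assume "\<sigma> \<in> {\<sigma>. \<sigma> permutes {..<n}}"
    then have s: "?inv \<sigma> permutes {..<n}" by (simp add: permutes_inv)
    show "(\<Sum>q\<in>?I. if q = (permute_list (?inv \<sigma>) x, permute_list (?inv \<sigma>) y)
        then Y (fst q) (snd q) else 0) = Y x y"
      using Y s x y permute_list_idx[OF s x] permute_list_idx[OF s y]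
      by (simp add: perm_invariant_def)
  qed
  also have "\<dots> = fact n * Y x y" using card_permutations[of "{..<n}" n] by simp
  finally have "(\<Sum>q\<in>?I. Y (fst q) (snd q) * orbit_op n (fst q) (snd q) x y) / fact n = Y x y"
    by simp
  then show ?thesis by (simp add: sum_divide_distrib)
qed

lemma tcommute_perm_invariant:
  fixes T :: "nat list \<Rightarrow> nat list \<Rightarrow> 'a::field_char_0"
  assumes T: "\<And>X. X \<in> carrier_mat d d \<Longrightarrow> tcommute d n (tpow n X) T"
    and Y: "perm_invariant d n Y"
  shows "tcommute d n Y T"
proof (rule tcommute_sum[where S = "idx d n \<times> idx d n" and c = "\<lambda>q. Y (fst q) (snd q) / fact n"
      and A = "\<lambda>q. orbit_op n (fst q) (snd q)"])
  show "tcommute d n (orbit_op n (fst q) (snd q)) T" if "q \<in> idx d n \<times> idx d n" for q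
    using that by (intro tcommute_orbit_op[OF T]) (auto simp: idx_iff)
  show "Y x y = (\<Sum>q\<in>idx d n \<times> idx d n. Y (fst q) (snd q) / fact n * orbit_op n (fst q) (snd q) x y)"
    if "x \<in> idx d n" "y \<in> idx d n" for x y
    using perm_invariant_eq_sum_orbit_op[OF Y that] .
qed

section \<open>The double commutant of the permutation operators\<close>

definition lin_comb :: "'i set \<Rightarrow> ('i \<Rightarrow> 'a::comm_ring_1) \<Rightarrow> ('i \<Rightarrow> 'x \<Rightarrow> 'y \<Rightarrow> 'a) \<Rightarrow> 'x \<Rightarrow> 'y \<Rightarrow> 'a" where
  "lin_comb S c v = (\<lambda>a b. \<Sum>i\<in>S. c i * v i a b)"

definition linear_op :: "(('x \<Rightarrow> 'y \<Rightarrow> 'a::comm_ring_1) \<Rightarrow> ('x \<Rightarrow> 'y \<Rightarrow> 'a)) \<Rightarrow> bool" where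
  "linear_op p \<longleftrightarrow> (\<forall>X Y. p (\<lambda>a b. X a b + Y a b) = (\<lambda>a b. p X a b + p Y a b)) \<and>
     (\<forall>c X. p (\<lambda>a b. c * X a b) = (\<lambda>a b. c * p X a b))"

lemma linear_op_add: "linear_op p \<Longrightarrow> p (\<lambda>a b. X a b + Y a b) = (\<lambda>a b. p X a b + p Y a b)"
  unfolding linear_op_def by blast

lemma linear_op_scale: "linear_op p \<Longrightarrow> p (\<lambda>a b. c * X a b) = (\<lambda>a b. c * p X a b)"
  unfolding linear_op_def by blast

lemma linear_op_lin_comb:
  assumes p: "linear_op p" and fin: "finite S"
  shows "p (lin_comb S c v) = lin_comb S c (\<lambda>i. p (v i))"
  using fin
proof (induct S rule: finite_induct)
  case empty
  then show ?case using linear_op_scale[OF p, of 0 "\<lambda>a b. 0"] by (simp add: lin_comb_def)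
next
  case (insert i S)
  have e: "lin_comb (insert i S) c v = (\<lambda>a b. (\<lambda>a b. c i * v i a b) a b + lin_comb S c v a b)"
    using insert by (simp add: lin_comb_def fun_eq_iff)
  have "p (lin_comb (insert i S) c v) = (\<lambda>a b. p (\<lambda>a b. c i * v i a b) a b + p (lin_comb S c v) a b)"
    unfolding e by (rule linear_op_add[OF p])
  also have "\<dots> = (\<lambda>a b. c i * p (v i) a b + lin_comb S c (\<lambda>i. p (v i)) a b)"
    unfolding linear_op_scale[OF p] insert(3) ..
  also have "\<dots> = lin_comb (insert i S) c (\<lambda>i. p (v i))"
    using insert by (simp add: lin_comb_def fun_eq_iff)
  finally show ?case .
qed

lemma linear_retraction_insert:
  fixes v :: "'i \<Rightarrow> 'x \<Rightarrow> 'y \<Rightarrow> 'a::field"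
  assumes p: "linear_op p" "\<forall>i\<in>S. p (v i) = v i" "\<forall>X. \<exists>c. p X = lin_comb S c v"
    and fin: "finite S" and j: "j \<notin> S" and new: "\<nexists>c. v j = lin_comb S c v"
  shows "\<exists>p'. linear_op p' \<and> (\<forall>i\<in>insert j S. p' (v i) = v i)
    \<and> (\<forall>X. \<exists>c. p' X = lin_comb (insert j S) c v)"
proof -
  define u where "u = (\<lambda>a b. v j a b - p (v j) a b)"
  obtain c2 where c2: "p (v j) = lin_comb S c2 v" using p(3) by blast
  have "u \<noteq> (\<lambda>a b. 0)"
  proof
    assume "u = (\<lambda>a b. 0)"
    then have "v j = p (v j)" unfolding u_def by (simp add: fun_eq_iff)
    then show False using new c2 by auto
  qed
  then obtain a0 b0 where u0: "u a0 b0 \<noteq> 0" by (auto simp: fun_eq_iff)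
  (* correct p along u, which is nonzero because v j is not in the span of S *)
  define p' where "p' X = (\<lambda>a b. p X a b + ((X a0 b0 - p X a0 b0) / u a0 b0) * u a b)" for X
  have lin: "linear_op p'"
    unfolding linear_op_def p'_def linear_op_add[OF p(1)] linear_op_scale[OF p(1)]
    by (auto simp: fun_eq_iff algebra_simps add_divide_distrib diff_divide_distrib)
  have fixS: "\<forall>i\<in>S. p' (v i) = v i" using p(2) by (auto simp: p'_def)
  have fixj: "p' (v j) = v j" using u0 by (auto simp: p'_def u_def fun_eq_iff)
  have img: "\<exists>c. p' X = lin_comb (insert j S) c v" for X
  proof -
    obtain c where c: "p X = lin_comb S c v" using p(3) by blast
    define l where "l = (X a0 b0 - p X a0 b0) / u a0 b0"
    define c' where "c' i = (if i = j then l else c i - l * c2 i)" for i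
    have "p' X = lin_comb (insert j S) c' v"
    proof (rule ext, rule ext)
      fix a b
      have "(\<Sum>i\<in>S. c' i * v i a b) = (\<Sum>i\<in>S. c i * v i a b - l * (c2 i * v i a b))"
        using j by (intro sum.cong) (auto simp: c'_def algebra_simps)
      then have sS: "(\<Sum>i\<in>S. c' i * v i a b) = (\<Sum>i\<in>S. c i * v i a b) - l * (\<Sum>i\<in>S. c2 i * v i a b)"
        by (simp add: sum_subtractf sum_distrib_left)
      have "p' X a b = lin_comb S c v a b + l * (v j a b - lin_comb S c2 v a b)"
        unfolding p'_def l_def u_def c[symmetric] c2[symmetric] by simp
      also have "\<dots> = lin_comb (insert j S) c' v a b"
        using fin j sS by (simp add: lin_comb_def c'_def algebra_simps)
      finally show "p' X a b = lin_comb (insert j S) c' v a b" .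
    qed
    then show ?thesis by blast
  qed
  show ?thesis using lin fixS fixj img by blast
qed

lemma linear_retraction_exists:
  fixes v :: "'i \<Rightarrow> 'x \<Rightarrow> 'y \<Rightarrow> 'a::field"
  assumes "finite S"
  shows "\<exists>p. linear_op p \<and> (\<forall>i\<in>S. p (v i) = v i) \<and> (\<forall>X. \<exists>c. p X = lin_comb S c v)"
  using assms
proof (induct S rule: finite_induct)
  case empty
  show ?case
    by (rule exI[of _ "\<lambda>X a b. 0"]) (auto simp: linear_op_def lin_comb_def)
next
  case (insert j S)
  from insert(3) obtain p
    where p: "linear_op p" "\<forall>i\<in>S. p (v i) = v i" "\<forall>X. \<exists>c. p X = lin_comb S c v"
    by blast
  show ?case
  proof (cases "\<exists>c0. v j = lin_comb S c0 v")
    case True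
    then obtain c0 where c0: "v j = lin_comb S c0 v" by blast
    have "p (v j) = lin_comb S c0 (\<lambda>i. p (v i))"
      unfolding c0 by (rule linear_op_lin_comb[OF p(1) insert(1)])
    also have "\<dots> = v j"
      using p(2) c0 unfolding lin_comb_def by (auto intro!: sum.cong)
    finally have "\<forall>i\<in>insert j S. p (v i) = v i" using p(2) by auto
    moreover have "lin_comb S c v = lin_comb (insert j S) (c(j := 0)) v" for c
      using insert(1,2) unfolding lin_comb_def by (auto simp: fun_eq_iff intro!: sum.cong)
    then have "\<forall>X. \<exists>c. p X = lin_comb (insert j S) c v" using p(3) by metis
    ultimately show ?thesis using p(1) by blast
  next
    case False
    then show ?thesis using linear_retraction_insert[OF p insert(1,2)] by blast
  qed
qed

definition unit_op :: "nat list \<Rightarrow> nat list \<Rightarrow> nat list \<Rightarrow> nat list \<Rightarrow> 'a::comm_ring_1" where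
  "unit_op b c = (\<lambda>x y. if x = b \<and> y = c then 1 else 0)"

text \<open>Operators are represented by their entries on multi-indices; restricting them to idx
  makes the representation unique, so that rmul is an honest associative multiplication.\<close>

context
  fixes d n :: nat
begin

definition trestrict :: "(nat list \<Rightarrow> nat list \<Rightarrow> 'a::comm_ring_1) \<Rightarrow> nat list \<Rightarrow> nat list \<Rightarrow> 'a" where
  "trestrict X = (\<lambda>a b. if a \<in> idx d n \<and> b \<in> idx d n then X a b else 0)"

definition rmul :: "(nat list \<Rightarrow> nat list \<Rightarrow> 'a::comm_ring_1) \<Rightarrow> (nat list \<Rightarrow> nat list \<Rightarrow> 'a)
    \<Rightarrow> nat list \<Rightarrow> nat list \<Rightarrow> 'a" where
  "rmul X Y = trestrict (tmul d n X Y)"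

definition rperm :: "(nat \<Rightarrow> nat) \<Rightarrow> nat list \<Rightarrow> nat list \<Rightarrow> 'a::comm_ring_1" where
  "rperm \<sigma> = trestrict (perm_op n \<sigma>)"

lemma tmul_trestrict_left: "a \<in> idx d n \<Longrightarrow> tmul d n (trestrict X) Y a b = tmul d n X Y a b"
  unfolding tmul_def trestrict_def by (intro sum.cong) auto

lemma tmul_trestrict_right: "b \<in> idx d n \<Longrightarrow> tmul d n X (trestrict Y) a b = tmul d n X Y a b"
  unfolding tmul_def trestrict_def by (intro sum.cong) auto

lemma rmul_apply: "rmul X Y a b = (if a \<in> idx d n \<and> b \<in> idx d n then tmul d n X Y a b else 0)"
  by (simp add: rmul_def trestrict_def)

lemma rmul_trestrict_left: "rmul (trestrict X) Y = rmul X Y"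
  by (auto simp: fun_eq_iff rmul_apply tmul_trestrict_left)

lemma rmul_trestrict_right: "rmul X (trestrict Y) = rmul X Y"
  by (auto simp: fun_eq_iff rmul_apply tmul_trestrict_right)

lemma rmul_assoc: "rmul (rmul A B) C = rmul A (rmul B C)"
  unfolding rmul_def[of A B] rmul_def[of B C] rmul_trestrict_left rmul_trestrict_right
  by (simp add: rmul_def tmul_assoc)

lemma rmul_rperm:
  assumes s: "\<sigma> permutes {..<n}" and t: "\<tau> permutes {..<n}"
  shows "rmul (rperm \<sigma>) (rperm \<tau>) = (rperm (\<tau> \<circ> \<sigma>) :: nat list \<Rightarrow> nat list \<Rightarrow> 'a::comm_ring_1)"
proof (intro ext)
  fix x y
  show "rmul (rperm \<sigma>) (rperm \<tau>) x y = (rperm (\<tau> \<circ> \<sigma>) :: nat list \<Rightarrow> nat list \<Rightarrow> 'a) x y"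
  proof (cases "x \<in> idx d n \<and> y \<in> idx d n")
    case True
    then have x: "x \<in> idx d n" and y: "y \<in> idx d n" by auto
    have l: "length x = n" "length y = n" using x y by (auto simp: idx_iff)
    have "rmul (rperm \<sigma>) (rperm \<tau>) x y = perm_op n \<tau> (permute_list (Hilbert_Choice.inv \<sigma>) x) y"
      unfolding rperm_def rmul_trestrict_left rmul_trestrict_right rmul_apply
      using True tmul_perm_op_left[OF s x] by simp
    also have "\<dots> = (if permute_list (Hilbert_Choice.inv \<sigma>) x = permute_list \<tau> y then 1 else 0)"
      using l by (simp add: perm_op_eq)
    also have "permute_list (Hilbert_Choice.inv \<sigma>) x = permute_list \<tau> y
        \<longleftrightarrow> x = permute_list \<sigma> (permute_list \<tau> y)"
      using s x permute_list_idx[OF t y] by (rule permute_list_inv_eq_iff)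
    also have "permute_list \<sigma> (permute_list \<tau> y) = permute_list (\<tau> \<circ> \<sigma>) y"
      using s l by (simp add: permute_list_compose)
    finally show ?thesis using True l by (simp add: rperm_def trestrict_def perm_op_eq)
  qed (auto simp: rmul_apply rperm_def trestrict_def)
qed

lemma rmul_rperm_id_right: "rmul X (rperm id) = trestrict X"
proof (intro ext)
  fix x y
  show "rmul X (rperm id) x y = trestrict X x y"
    unfolding rperm_def rmul_trestrict_right
    by (cases "x \<in> idx d n \<and> y \<in> idx d n") (auto simp: rmul_apply tmul_perm_op_right trestrict_def)
qed

lemma rmul_rperm_apply:
  assumes "\<sigma> permutes {..<n}" and "x \<in> idx d n" and "y \<in> idx d n"
  shows "rmul (rperm \<sigma>) Y x y = Y (permute_list (Hilbert_Choice.inv \<sigma>) x) y"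
  unfolding rperm_def rmul_trestrict_left rmul_apply using assms tmul_perm_op_left by simp

lemma rmul_rperm_unit_op:
  assumes s: "\<sigma> permutes {..<n}" and b: "b \<in> idx d n"
  shows "rmul (rperm \<sigma>) (unit_op b c) = trestrict (unit_op (permute_list \<sigma> b) c)"
proof (intro ext)
  fix x y
  show "rmul (rperm \<sigma>) (unit_op b c) x y = trestrict (unit_op (permute_list \<sigma> b) c) x y"
  proof (cases "x \<in> idx d n \<and> y \<in> idx d n")
    case True
    then have x: "x \<in> idx d n" by simp
    from True have "rmul (rperm \<sigma>) (unit_op b c) x y
        = (if permute_list (Hilbert_Choice.inv \<sigma>) x = b \<and> y = c then 1 else 0)"
      using s by (simp add: rmul_rperm_apply unit_op_def)
    also have "\<dots> = trestrict (unit_op (permute_list \<sigma> b) c) x y"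
      unfolding permute_list_inv_eq_iff[OF s x b] using True by (simp add: unit_op_def trestrict_def)
    finally show ?thesis .
  qed (auto simp: rmul_apply trestrict_def)
qed

lemma linear_op_rmul: "linear_op (rmul A)"
  unfolding linear_op_def rmul_def tmul_def trestrict_def
  by (auto simp: fun_eq_iff algebra_simps sum.distrib sum_distrib_left)

lemma rmul_sum_right:
  "finite F \<Longrightarrow> rmul A (\<lambda>a b. \<Sum>i\<in>F. f i a b) = (\<lambda>a b. \<Sum>i\<in>F. rmul A (f i) a b)"
  unfolding rmul_def tmul_def trestrict_def
  by (auto simp: fun_eq_iff sum_distrib_left intro: sum.swap)

lemma trestrict_eq_lin_comb:
  "trestrict X = lin_comb (idx d n \<times> idx d n) (\<lambda>q. X (fst q) (snd q)) (\<lambda>q. unit_op (fst q) (snd q))"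
proof (intro ext)
  fix x y
  have "lin_comb (idx d n \<times> idx d n) (\<lambda>q. X (fst q) (snd q)) (\<lambda>q. unit_op (fst q) (snd q)) x y
      = (\<Sum>q\<in>idx d n \<times> idx d n. if q = (x, y) then X x y else 0)"
    unfolding lin_comb_def unit_op_def by (intro sum.cong) auto
  then show "trestrict X x y
      = lin_comb (idx d n \<times> idx d n) (\<lambda>q. X (fst q) (snd q)) (\<lambda>q. unit_op (fst q) (snd q)) x y"
    by (simp add: trestrict_def)
qed

text \<open>Maschke's averaging of a linear map p over S_n; the result is S_n-equivariant.\<close>

definition average :: "((nat list \<Rightarrow> nat list \<Rightarrow> 'a::comm_ring_1) \<Rightarrow> (nat list \<Rightarrow> nat list \<Rightarrow> 'a))
    \<Rightarrow> (nat list \<Rightarrow> nat list \<Rightarrow> 'a) \<Rightarrow> nat list \<Rightarrow> nat list \<Rightarrow> 'a" where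
  "average p X = (\<lambda>a b. \<Sum>\<sigma> | \<sigma> permutes {..<n}.
     rmul (rperm \<sigma>) (p (rmul (rperm (Hilbert_Choice.inv \<sigma>)) X)) a b)"

lemma average_trestrict: "average p (trestrict X) = average p X"
  unfolding average_def rmul_trestrict_right ..

lemma average_outside: "\<not> (a \<in> idx d n \<and> b \<in> idx d n) \<Longrightarrow> average p X a b = 0"
  unfolding average_def by (auto simp: rmul_apply)

lemma linear_op_average: "linear_op p \<Longrightarrow> linear_op (average p)"
  unfolding linear_op_def average_def
  by (simp add: linear_op_add[OF linear_op_rmul] linear_op_scale[OF linear_op_rmul]
      sum.distrib sum_distrib_left)

lemma average_rmul_rperm:
  assumes t: "\<tau> permutes {..<n}"
  shows "average p (rmul (rperm \<tau>) X) = rmul (rperm \<tau>) (average p X)"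
proof -
  let ?P = "{\<sigma>. \<sigma> permutes {..<n}}"
  let ?inv = "Hilbert_Choice.inv"
  have "average p (rmul (rperm \<tau>) X)
      = (\<lambda>a b. \<Sum>\<sigma>\<in>?P. rmul (rperm \<sigma>) (p (rmul (rperm (\<tau> \<circ> ?inv \<sigma>)) X)) a b)"
    unfolding average_def
  proof (intro ext sum.cong refl)
    fix a b \<sigma> assume "\<sigma> \<in> ?P"
    then have s: "?inv \<sigma> permutes {..<n}" by (simp add: permutes_inv)
    show "rmul (rperm \<sigma>) (p (rmul (rperm (?inv \<sigma>)) (rmul (rperm \<tau>) X))) a b
        = rmul (rperm \<sigma>) (p (rmul (rperm (\<tau> \<circ> ?inv \<sigma>)) X)) a b"
      unfolding rmul_assoc[symmetric] rmul_rperm[OF s t] ..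
  qed
  also have "\<dots> = (\<lambda>a b. \<Sum>\<rho>\<in>?P. rmul (rperm (\<rho> \<circ> \<tau>)) (p (rmul (rperm (\<tau> \<circ> ?inv (\<rho> \<circ> \<tau>))) X)) a b)"
    by (intro ext sum_permutations_compose_right[OF t])
  also have "\<dots> = (\<lambda>a b. \<Sum>\<rho>\<in>?P. rmul (rperm \<tau>) (rmul (rperm \<rho>) (p (rmul (rperm (?inv \<rho>)) X))) a b)"
  proof (intro ext sum.cong refl)
    fix a b \<rho> assume "\<rho> \<in> ?P"
    then have r: "\<rho> permutes {..<n}" by simp
    have "\<tau> \<circ> ?inv (\<rho> \<circ> \<tau>) = ?inv \<rho>"
      using r t by (simp add: o_inv_distrib permutes_bij o_assoc permutes_inv_o)
    then show "rmul (rperm (\<rho> \<circ> \<tau>)) (p (rmul (rperm (\<tau> \<circ> ?inv (\<rho> \<circ> \<tau>))) X)) a b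
        = rmul (rperm \<tau>) (rmul (rperm \<rho>) (p (rmul (rperm (?inv \<rho>)) X))) a b"
      unfolding rmul_assoc[symmetric] rmul_rperm[OF t r] by simp
  qed
  also have "\<dots> = rmul (rperm \<tau>) (average p X)"
    unfolding average_def by (rule rmul_sum_right[symmetric]) (simp add: finite_permutations)
  finally show ?thesis .
qed

lemma average_in_span:
  assumes img: "\<forall>X. \<exists>c. p X = lin_comb {\<sigma>. \<sigma> permutes {..<n}} c rperm"
  shows "\<exists>c. average p X = lin_comb {\<sigma>. \<sigma> permutes {..<n}} c rperm"
proof -
  let ?P = "{\<sigma>. \<sigma> permutes {..<n}}"
  let ?inv = "Hilbert_Choice.inv"
  from img have "\<forall>\<sigma>. \<exists>c. p (rmul (rperm (?inv \<sigma>)) X) = lin_comb ?P c rperm" by blast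
  from choice[OF this] obtain C where C: "\<And>\<sigma>. p (rmul (rperm (?inv \<sigma>)) X) = lin_comb ?P (C \<sigma>) rperm"
    by blast
  have fP: "finite ?P" by (simp add: finite_permutations)
  have "rmul (rperm \<sigma>) (lin_comb ?P (C \<sigma>) rperm) = lin_comb ?P (\<lambda>\<rho>. C \<sigma> (\<rho> \<circ> ?inv \<sigma>)) rperm"
    if "\<sigma> \<in> ?P" for \<sigma>
  proof -
    have s: "\<sigma> permutes {..<n}" "?inv \<sigma> permutes {..<n}" using that by (auto simp: permutes_inv)
    have "rmul (rperm \<sigma>) (lin_comb ?P (C \<sigma>) rperm) = lin_comb ?P (C \<sigma>) (\<lambda>\<tau>. rmul (rperm \<sigma>) (rperm \<tau>))"
      by (rule linear_op_lin_comb[OF linear_op_rmul fP])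
    also have "\<dots> = lin_comb ?P (C \<sigma>) (\<lambda>\<tau>. rperm (\<tau> \<circ> \<sigma>))"
      using s unfolding lin_comb_def by (auto simp: rmul_rperm fun_eq_iff intro!: sum.cong)
    also have "\<dots> = lin_comb ?P (\<lambda>\<rho>. C \<sigma> (\<rho> \<circ> ?inv \<sigma>)) rperm"
      unfolding lin_comb_def using s
      by (subst sum_permutations_compose_right[OF s(2)])
         (simp add: o_assoc[symmetric] permutes_inv_o[OF s(1)])
    finally show ?thesis .
  qed
  then have "average p X = (\<lambda>a b. \<Sum>\<sigma>\<in>?P. lin_comb ?P (\<lambda>\<rho>. C \<sigma> (\<rho> \<circ> ?inv \<sigma>)) rperm a b)"
    unfolding average_def C by (intro ext sum.cong refl) auto
  also have "\<dots> = lin_comb ?P (\<lambda>\<rho>. \<Sum>\<sigma>\<in>?P. C \<sigma> (\<rho> \<circ> ?inv \<sigma>)) rperm"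
    unfolding lin_comb_def by (auto simp: fun_eq_iff sum_distrib_right intro: sum.swap)
  finally show ?thesis by blast
qed

lemma average_rperm_id:
  fixes p :: "(nat list \<Rightarrow> nat list \<Rightarrow> 'a::comm_ring_1) \<Rightarrow> nat list \<Rightarrow> nat list \<Rightarrow> 'a"
  assumes fix_perm: "\<forall>\<sigma>\<in>{\<sigma>. \<sigma> permutes {..<n}}. p (rperm \<sigma>) = rperm \<sigma>"
  shows "average p (rperm id) = (\<lambda>a b. of_nat (fact n) * rperm id a b)"
proof -
  have "average p (rperm id) = (\<lambda>a b. \<Sum>\<sigma> | \<sigma> permutes {..<n}. rperm id a b)"
    unfolding average_def
  proof (intro ext sum.cong refl)
    fix a b \<sigma> assume "\<sigma> \<in> {\<sigma>. \<sigma> permutes {..<n}}"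
    then have s: "\<sigma> permutes {..<n}" "Hilbert_Choice.inv \<sigma> permutes {..<n}"
      by (auto simp: permutes_inv)
    have "rmul (rperm (Hilbert_Choice.inv \<sigma>)) (rperm id)
        = (rperm (Hilbert_Choice.inv \<sigma>) :: nat list \<Rightarrow> nat list \<Rightarrow> 'a)"
      using rmul_rperm[OF s(2) permutes_id] by simp
    moreover have "p (rperm (Hilbert_Choice.inv \<sigma>)) = rperm (Hilbert_Choice.inv \<sigma>)"
      using fix_perm s(2) by blast
    moreover have "rmul (rperm \<sigma>) (rperm (Hilbert_Choice.inv \<sigma>)) = (rperm id :: nat list \<Rightarrow> nat list \<Rightarrow> 'a)"
      using rmul_rperm[OF s] permutes_inv_o(2)[OF s(1)] by simp
    ultimately show "rmul (rperm \<sigma>) (p (rmul (rperm (Hilbert_Choice.inv \<sigma>)) (rperm id))) a b = rperm id a b"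
      by simp
  qed
  then show ?thesis using card_permutations[of "{..<n}" n] by simp
qed

text \<open>The column c' of average p Z is a sum of products of perm_invariant operators with
  columns of Z, which is why operators commuting with all of these commute with average p.\<close>

lemma average_eq_sum_tmul:
  assumes p: "linear_op p"
  shows "average p Z x c' = (\<Sum>c\<in>idx d n. tmul d n (\<lambda>u b. average p (unit_op b c) u c') Z x c)"
proof -
  have "average p Z = average p (trestrict Z)" by (rule average_trestrict[symmetric])
  also have "\<dots> = lin_comb (idx d n \<times> idx d n) (\<lambda>q. Z (fst q) (snd q))
      (\<lambda>q. average p (unit_op (fst q) (snd q)))"
    unfolding trestrict_eq_lin_comb by (rule linear_op_lin_comb[OF linear_op_average[OF p]]) simp
  finally have "average p Z x c'
      = (\<Sum>q\<in>idx d n \<times> idx d n. Z (fst q) (snd q) * average p (unit_op (fst q) (snd q)) x c')"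
    by (simp add: lin_comb_def)
  also have "\<dots> = (\<Sum>b\<in>idx d n. \<Sum>c\<in>idx d n. Z b c * average p (unit_op b c) x c')"
    by (simp add: sum.cartesian_product case_prod_beta)
  also have "\<dots> = (\<Sum>c\<in>idx d n. \<Sum>b\<in>idx d n. average p (unit_op b c) x c' * Z b c)"
    by (subst sum.swap) (simp add: mult.commute)
  also have "\<dots> = (\<Sum>c\<in>idx d n. tmul d n (\<lambda>u b. average p (unit_op b c) u c') Z x c)"
    by (simp add: tmul_def)
  finally show ?thesis .
qed

lemma perm_invariant_average_unit_op:
  assumes c': "c' \<in> idx d n"
  shows "perm_invariant d n (\<lambda>u b. average p (unit_op b c) u c')"
  unfolding perm_invariant_def
proof (intro allI impI)
  fix \<sigma> a b assume s: "\<sigma> permutes {..<n}" and a: "a \<in> idx d n" and b: "b \<in> idx d n"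
  have cancel: "permute_list (Hilbert_Choice.inv \<sigma>) (permute_list \<sigma> a) = a"
    using s a by (intro permute_list_inv_cancel) (simp add: idx_iff)
  have "average p (unit_op (permute_list \<sigma> b) c) = average p (rmul (rperm \<sigma>) (unit_op b c))"
    unfolding rmul_rperm_unit_op[OF s b] average_trestrict ..
  also have "\<dots> = rmul (rperm \<sigma>) (average p (unit_op b c))" by (rule average_rmul_rperm[OF s])
  finally show "average p (unit_op (permute_list \<sigma> b) c) (permute_list \<sigma> a) c'
      = average p (unit_op b c) a c'"
    using rmul_rperm_apply[OF s permute_list_idx[OF s a] c'] cancel by simp
qed

lemma average_rmul_commute:
  fixes T :: "nat list \<Rightarrow> nat list \<Rightarrow> 'a::field"
  assumes p: "linear_op p" and T: "\<And>Y. perm_invariant d n Y \<Longrightarrow> tcommute d n Y T"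
  shows "average p (rmul T X) = rmul T (average p X)"
proof (intro ext)
  fix x c'
  show "average p (rmul T X) x c' = rmul T (average p X) x c'"
  proof (cases "x \<in> idx d n \<and> c' \<in> idx d n")
    case True
    then have x: "x \<in> idx d n" and c': "c' \<in> idx d n" by auto
    let ?Y = "\<lambda>c u b. average p (unit_op b c) u c'"
    have "average p (rmul T X) x c' = (\<Sum>c\<in>idx d n. tmul d n (?Y c) (rmul T X) x c)"
      by (rule average_eq_sum_tmul[OF p])
    also have "\<dots> = (\<Sum>c\<in>idx d n. tmul d n (tmul d n (?Y c) T) X x c)"
      by (intro sum.cong refl) (simp add: rmul_def tmul_trestrict_right tmul_assoc)
    also have "\<dots> = (\<Sum>c\<in>idx d n. tmul d n (tmul d n T (?Y c)) X x c)"
      using T[OF perm_invariant_average_unit_op[OF c']] x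
      by (intro sum.cong refl tmul_cong) (auto simp: tcommute_def)
    also have "\<dots> = (\<Sum>c\<in>idx d n. \<Sum>z\<in>idx d n. T x z * tmul d n (?Y c) X z c)"
      by (simp only: tmul_assoc) (simp only: tmul_def)
    also have "\<dots> = (\<Sum>z\<in>idx d n. T x z * (\<Sum>c\<in>idx d n. tmul d n (?Y c) X z c))"
      by (subst sum.swap) (simp add: sum_distrib_left)
    also have "\<dots> = (\<Sum>z\<in>idx d n. T x z * average p X z c')"
      by (simp only: average_eq_sum_tmul[OF p, of X _ c'])
    also have "\<dots> = rmul T (average p X) x c'"
      using True by (simp add: rmul_apply tmul_def)
    finally show ?thesis .
  next
    case False
    then show ?thesis by (simp only: average_outside[OF False] rmul_apply if_not_P[OF False] if_False)
  qed
qed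

theorem in_perm_span_if_tcommute_perm_invariant:
  fixes T :: "nat list \<Rightarrow> nat list \<Rightarrow> 'a::field_char_0"
  assumes T: "\<And>Y. perm_invariant d n Y \<Longrightarrow> tcommute d n Y T"
  shows "in_perm_span d n T"
proof -
  let ?P = "{\<sigma>. \<sigma> permutes {..<n}}"
  have "finite ?P" by (simp add: finite_permutations)
  from linear_retraction_exists[OF this, of rperm]
  obtain p :: "(nat list \<Rightarrow> nat list \<Rightarrow> 'a) \<Rightarrow> nat list \<Rightarrow> nat list \<Rightarrow> 'a"
    where p: "linear_op p" "\<forall>\<sigma>\<in>?P. p (rperm \<sigma>) = rperm \<sigma>" "\<forall>X. \<exists>c. p X = lin_comb ?P c rperm"
    by blast
  obtain c where c: "average p (trestrict T) = lin_comb ?P c rperm"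
    using average_in_span[OF p(3)] by blast
  have "average p (trestrict T) = average p (rmul T (rperm id))"
    by (simp only: rmul_rperm_id_right)
  also have "\<dots> = rmul T (average p (rperm id))" by (rule average_rmul_commute[OF p(1) T])
  also have "\<dots> = (\<lambda>a b. of_nat (fact n) * trestrict T a b)"
    by (simp only: average_rperm_id[OF p(2)] linear_op_scale[OF linear_op_rmul] rmul_rperm_id_right)
  finally have "average p (trestrict T) = (\<lambda>a b. of_nat (fact n) * trestrict T a b)" .
  from this c have e: "(\<lambda>a b. of_nat (fact n) * trestrict T a b) = lin_comb ?P c rperm"
    by (rule trans[OF sym])
  have "T x y = (\<Sum>\<sigma>\<in>?P. c \<sigma> / fact n * perm_op n \<sigma> x y)" if "x \<in> idx d n" "y \<in> idx d n" for x y
  proof -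
    have "fact n * T x y = (\<Sum>\<sigma>\<in>?P. c \<sigma> * perm_op n \<sigma> x y)"
      using fun_cong[OF fun_cong[OF e, of x], of y] that
      by (simp add: trestrict_def rperm_def lin_comb_def)
    then have "T x y = (\<Sum>\<sigma>\<in>?P. c \<sigma> * perm_op n \<sigma> x y) / fact n"
      by (simp add: eq_divide_eq mult.commute)
    then show ?thesis by (simp add: sum_divide_distrib)
  qed
  then have "\<forall>x\<in>idx d n. \<forall>y\<in>idx d n. T x y = (\<Sum>\<sigma>\<in>?P. c \<sigma> / fact n * perm_op n \<sigma> x y)"
    by blast
  then show ?thesis unfolding in_perm_span_def by (rule exI[of _ "\<lambda>\<sigma>. c \<sigma> / fact n"])
qed

end

theorem mainTheorem2:
  fixes G :: "nat list list \<Rightarrow> 'a::field_char_0"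
    and d n :: nat
  assumes "d \<ge> 1" and "n \<ge> 1"
    and "tensor_poly d n G"
    and "multilinear_alternating d n (teval d n G)"
  shows "\<exists>J :: nat list \<Rightarrow> nat list \<Rightarrow> 'a. GL_invariant d n J \<and> in_perm_span d n J \<and>
     (\<forall>xs. (\<forall>k<d*d. xs k \<in> carrier_mat d d) \<longrightarrow>
        (\<forall>is\<in>idx d n. \<forall>js\<in>idx d n. teval d n G xs is js = det_coords d xs * J is js))"
proof -
  let ?J = "teval d n G (elem_mat d)"
  have inv: "GL_invariant d n ?J"
    using assms(3,4) by (rule GL_invariant_teval_elem_mat)
  have "tcommute d n (tpow n X) ?J" if "X \<in> carrier_mat d d" for X
    using GL_invariant_tcommute_tpow[OF inv] that by (rule tcommute_tpow_if_tcommute_invertible)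
  then have "tcommute d n Y ?J" if "perm_invariant d n Y" for Y
    using that by (rule tcommute_perm_invariant)
  then have "in_perm_span d n ?J"
    by (rule in_perm_span_if_tcommute_perm_invariant)
  moreover have "teval d n G xs x y = det_coords d xs * ?J x y"
    if "\<forall>k<d*d. xs k \<in> carrier_mat d d" and "x \<in> idx d n" and "y \<in> idx d n" for xs x y
    using assms(3,4) that by (rule teval_eq_det_coords)
  ultimately show ?thesis using inv by blast
qed

end
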